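(* Fix $\beta\ge1$ and let $\{X_i\}_{i\ge1}$, $W_n$, $\xi$, $\mathcal H$ and $\alpha$ be as in the context, with $\sup_{i\ge1}\mathbb E[|X_i|^{2+\alpha}]<\infty$. Fix $f\in\mathcal H$ and let $\xi_k:=f(W_k)-\mathbb E[f(W_k)]$, $Z_l:=\sum_{4^{l-1}\le i<4^l}\frac{\xi_i}{i}$ and $T_n:=\sum_{l=1}^nZ_l$. Then there exists a positive constant $M_6$ such that for all $n\ge1$, $$\mathbb E[T_n^2]\le M_6\, n.$$
   Context: Sub-linear expectation space $(\Omega,\mathscr H,\mathbb E)$: $(\Omega,\mathcal F)$ a measurable space, $\mathscr H$ a linear space of real measurable functions closed under $(X_1,\dots,X_n)\mapsto\varphi(X_1,\dots,X_n)$ for $\varphi\in C_{b,Lip}(\mathbb R^n)$ (bounded Lipschitz functions), and $\mathbb E:\mathscr H\to\mathbb R$ monotone, constant preserving, sub-additive and positively homogeneous; it is assumed $\mathbb E[X]=\sup_{P\in\mathcal P}E_P[X]$ for a family $\mathcal P$ of $\sigma$-additive probability measures. $(\widetilde\Omega,\widetilde{\mathscr H},\widetilde{\mathbb E})$ is another sub-linear expectation space. Both satisfy condition (A): for every $X$ and every sequence $f_n\in C_{b,Lip}(\mathbb R)$ with $f_n\downarrow0$, $\mathbb E[f_n(X)]\downarrow0$ (resp. $\widetilde{\mathbb E}[f_n(X)]\downarrow0$). Independence: $Y\in\mathscr H^n$ is independent of $X\in\mathscr H^m$ if $\mathbb E[\varphi(X,Y)]=\mathbb E\big[\mathbb E[\varphi(x,Y)]|_{x=X}\big]$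 for all $\varphi\in C_{b,Lip}(\mathbb R^{m+n})$; $\{X_n\}$ is independent if $X_{n+1}$ is independent of $(X_1,\dots,X_n)$ for every $n$. Standing setting: $\{X_i\}$ is independent in $(\Omega,\mathscr H,\mathbb E)$ with $\mathbb E[X_i]=\mathbb E[-X_i]=0$, $\overline\sigma_i=\sqrt{\mathbb E[X_i^2]}$, $\underline\sigma_i=\sqrt{-\mathbb E[-X_i^2]}$, $\overline\sigma_i/\underline\sigma_i=\beta$ for all $i$, $0<\inf_i\underline\sigma_i^2\le\sup_i\overline\sigma_i^2<\infty$; $S_n=\sum_{i\le n}X_i$, $\sigma_i=(\underline\sigma_i+\overline\sigma_i)/2$, $B_n=\sqrt{\sum_{i\le n}\sigma_i^2}$, $W_n=S_n/B_n$. $\xi$ is $G$-normal under $\widetilde{\mathbb E}$ (for each $f\in C_{b,Lip}(\mathbb R)$, $u(t,x)=\widetilde{\mathbb E}[f(x+\sqrt t\xi)]$ is the unique viscosity solution of $\partial_tu-G(\partial_{xx}u)=0$, $u(0,\cdot)=f$, with $G(a)=\frac12\widetilde{\mathbb E}[a\xi^2]$), with $\sqrt{\widetilde{\mathbb E}[\xi^2]}=\frac{2\beta}{1+\beta}$, $\sqrt{-\widetilde{\mathbb E}[-\xi^2]}=\frac{2}{1+\beta}$. $\mathcal H:=\{f\in C_{b,Lip}(\mathbb R):\widetilde{\mathbb E}[f(\xi)]=-\widetilde{\mathbb E}[-f(\xi)]\}$. $\alpha\in(0,1)$ is the constant from Song's theorem (cited): there exist $\alpha\in(0,1)$ depending on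 $\beta$ and $C_{\alpha,\beta}>0$ such that for every such sequence and every $n$, $\sup_{|f|_{Lip}\le1}|\mathbb E[f(W_n)]-\widetilde{\mathbb E}[f(\xi)]|\le C_{\alpha,\beta}\sup_{1\le i\le n}\{\frac{\mathbb E[|X_i|^{2+\alpha}]}{\sigma_i^{2+\alpha}}(\frac{\sigma_i}{B_n})^\alpha\}$. *)

theory Defs
  imports "HOL-Probability.Probability"
begin

definition bLip1 :: "(real \<Rightarrow> real) \<Rightarrow> bool" where
  "bLip1 f \<longleftrightarrow> (\<exists>B L. \<forall>x y. \<bar>f x\<bar> \<le> B \<and> \<bar>f x - f y\<bar> \<le> L * \<bar>x - y\<bar>)"

definition bLip1_le1 :: "(real \<Rightarrow> real) \<Rightarrow> bool" where
  "bLip1_le1 f \<longleftrightarrow> (\<exists>B. \<forall>x y. \<bar>f x\<bar> \<le> B \<and> \<bar>f x - f y\<bar> \<le> \<bar>x - y\<bar>)"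

text \<open>Bounded Lipschitz functions on R^k, points of R^k represented as real lists of length k
  (the l1 distance is used; all norms on R^k are equivalent, so the class is the same).\<close>
definition bLip_len :: "nat \<Rightarrow> (real list \<Rightarrow> real) \<Rightarrow> bool" where
  "bLip_len k \<phi> \<longleftrightarrow> (\<exists>B L. \<forall>xs ys. length xs = k \<longrightarrow> length ys = k \<longrightarrow>
      \<bar>\<phi> xs\<bar> \<le> B \<and> \<bar>\<phi> xs - \<phi> ys\<bar> \<le> L * (\<Sum>i<k. \<bar>xs ! i - ys ! i\<bar>))"

definition sublinear_space ::
  "'a measure \<Rightarrow> ('a \<Rightarrow> real) set \<Rightarrow> (('a \<Rightarrow> real) \<Rightarrow> real) \<Rightarrow> bool" where
  "sublinear_space M H E \<longleftrightarrow>
     H \<subseteq> borel_measurable M \<and>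
     (\<forall>X\<in>H. \<forall>Y\<in>H. (\<lambda>\<omega>. X \<omega> + Y \<omega>) \<in> H) \<and>
     (\<forall>c. \<forall>X\<in>H. (\<lambda>\<omega>. c * X \<omega>) \<in> H) \<and>
     (\<forall>Xs \<phi>. set Xs \<subseteq> H \<longrightarrow> bLip_len (length Xs) \<phi> \<longrightarrow>
         (\<lambda>\<omega>. \<phi> (map (\<lambda>X. X \<omega>) Xs)) \<in> H) \<and>
     (\<forall>X\<in>H. \<forall>Y\<in>H. (\<forall>\<omega>\<in>space M. X \<omega> \<le> Y \<omega>) \<longrightarrow> E X \<le> E Y) \<and>
     (\<forall>c. E (\<lambda>_. c) = c) \<and>
     (\<forall>X\<in>H. \<forall>Y\<in>H. E (\<lambda>\<omega>. X \<omega> + Y \<omega>) \<le> E X + E Y) \<and>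
     (\<forall>X\<in>H. \<forall>c\<ge>0. E (\<lambda>\<omega>. c * X \<omega>) = c * E X) \<and>
     (\<exists>\<P>. \<P> \<noteq> {} \<and> (\<forall>P\<in>\<P>. prob_space P \<and> sets P = sets M) \<and>
        (\<forall>X\<in>H. (\<forall>P\<in>\<P>. integrable P X) \<and> E X = (SUP P\<in>\<P>. (\<integral>\<omega>. X \<omega> \<partial>P))))"

definition condA :: "('a \<Rightarrow> real) set \<Rightarrow> (('a \<Rightarrow> real) \<Rightarrow> real) \<Rightarrow> bool" where
  "condA H E \<longleftrightarrow> (\<forall>X\<in>H. \<forall>fs :: nat \<Rightarrow> real \<Rightarrow> real.
      (\<forall>n. bLip1 (fs n)) \<longrightarrow> (\<forall>x. decseq (\<lambda>n. fs n x)) \<longrightarrow> (\<forall>x. (\<lambda>n. fs n x) \<longlonglongrightarrow> 0) \<longrightarrow>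
      (\<lambda>n. E (\<lambda>\<omega>. fs n (X \<omega>))) \<longlonglongrightarrow> 0)"

definition indep_of :: "(('a \<Rightarrow> real) \<Rightarrow> real) \<Rightarrow> ('a \<Rightarrow> real) list \<Rightarrow> ('a \<Rightarrow> real) \<Rightarrow> bool" where
  "indep_of E Xs Y \<longleftrightarrow> (\<forall>\<phi>. bLip_len (Suc (length Xs)) \<phi> \<longrightarrow>
      E (\<lambda>\<omega>. \<phi> (map (\<lambda>X. X \<omega>) Xs @ [Y \<omega>])) =
      E (\<lambda>\<omega>. E (\<lambda>\<omega>'. \<phi> (map (\<lambda>X. X \<omega>) Xs @ [Y \<omega>']))))"

text \<open>Independent sequence X_1, X_2, ... (index 0 is unused).\<close>
definition indep_seq :: "(('a \<Rightarrow> real) \<Rightarrow> real) \<Rightarrow> (nat \<Rightarrow> 'a \<Rightarrow> real) \<Rightarrow> bool" where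
  "indep_seq E X \<longleftrightarrow> (\<forall>n\<ge>1. indep_of E (map X [1..<Suc n]) (X (Suc n)))"

definition sig_up :: "(('a \<Rightarrow> real) \<Rightarrow> real) \<Rightarrow> (nat \<Rightarrow> 'a \<Rightarrow> real) \<Rightarrow> nat \<Rightarrow> real" where
  "sig_up E X i = sqrt (E (\<lambda>\<omega>. (X i \<omega>)\<^sup>2))"

definition sig_lo :: "(('a \<Rightarrow> real) \<Rightarrow> real) \<Rightarrow> (nat \<Rightarrow> 'a \<Rightarrow> real) \<Rightarrow> nat \<Rightarrow> real" where
  "sig_lo E X i = sqrt (- E (\<lambda>\<omega>. - (X i \<omega>)\<^sup>2))"

definition sig :: "(('a \<Rightarrow> real) \<Rightarrow> real) \<Rightarrow> (nat \<Rightarrow> 'a \<Rightarrow> real) \<Rightarrow> nat \<Rightarrow> real" where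
  "sig E X i = (sig_lo E X i + sig_up E X i) / 2"

definition Bn :: "(('a \<Rightarrow> real) \<Rightarrow> real) \<Rightarrow> (nat \<Rightarrow> 'a \<Rightarrow> real) \<Rightarrow> nat \<Rightarrow> real" where
  "Bn E X n = sqrt (\<Sum>i=1..n. (sig E X i)\<^sup>2)"

definition Sn :: "(nat \<Rightarrow> 'a \<Rightarrow> real) \<Rightarrow> nat \<Rightarrow> 'a \<Rightarrow> real" where
  "Sn X n = (\<lambda>\<omega>. \<Sum>i=1..n. X i \<omega>)"

definition Wn :: "(('a \<Rightarrow> real) \<Rightarrow> real) \<Rightarrow> (nat \<Rightarrow> 'a \<Rightarrow> real) \<Rightarrow> nat \<Rightarrow> 'a \<Rightarrow> real" where
  "Wn E X n = (\<lambda>\<omega>. Sn X n \<omega> / Bn E X n)"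

text \<open>The standing assumptions on a sequence (with ratio beta), including membership in H of
  the functionals X_i^2 and |X_i|^(2+alpha) whose expectations are used.\<close>
definition standing_seq ::
  "('a \<Rightarrow> real) set \<Rightarrow> (('a \<Rightarrow> real) \<Rightarrow> real) \<Rightarrow> real \<Rightarrow> real \<Rightarrow> (nat \<Rightarrow> 'a \<Rightarrow> real) \<Rightarrow> bool" where
  "standing_seq H E \<beta> \<alpha> X \<longleftrightarrow>
     indep_seq E X \<and>
     (\<forall>i\<ge>1. X i \<in> H \<and> (\<lambda>\<omega>. (X i \<omega>)\<^sup>2) \<in> H \<and> (\<lambda>\<omega>. \<bar>X i \<omega>\<bar> powr (2 + \<alpha>)) \<in> H) \<and>
     (\<forall>i\<ge>1. E (X i) = 0 \<and> E (\<lambda>\<omega>. - X i \<omega>) = 0) \<and>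
     (\<forall>i\<ge>1. sig_up E X i / sig_lo E X i = \<beta>) \<and>
     (\<exists>c>0. \<forall>i\<ge>1. c \<le> (sig_lo E X i)\<^sup>2) \<and>
     (\<exists>K. \<forall>i\<ge>1. (sig_up E X i)\<^sup>2 \<le> K)"

definition Gfun :: "(('b \<Rightarrow> real) \<Rightarrow> real) \<Rightarrow> ('b \<Rightarrow> real) \<Rightarrow> real \<Rightarrow> real" where
  "Gfun Et \<xi> a = 1/2 * Et (\<lambda>\<omega>. a * (\<xi> \<omega>)\<^sup>2)"

definition C12_test :: "(real \<Rightarrow> real \<Rightarrow> real) \<Rightarrow> (real \<Rightarrow> real \<Rightarrow> real) \<Rightarrow> (real \<Rightarrow> real \<Rightarrow> real) \<Rightarrow> bool" where
  "C12_test \<phi> \<phi>t \<phi>xx \<longleftrightarrow> (\<exists>\<phi>x.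
     (\<forall>t>0. \<forall>x. ((\<lambda>s. \<phi> s x) has_real_derivative \<phi>t t x) (at t) \<and>
               ((\<lambda>y. \<phi> t y) has_real_derivative \<phi>x t x) (at x) \<and>
               ((\<lambda>y. \<phi>x t y) has_real_derivative \<phi>xx t x) (at x)) \<and>
     continuous_on ({0<..} \<times> UNIV) (\<lambda>(t,x). \<phi> t x) \<and>
     continuous_on ({0<..} \<times> UNIV) (\<lambda>(t,x). \<phi>t t x) \<and>
     continuous_on ({0<..} \<times> UNIV) (\<lambda>(t,x). \<phi>x t x) \<and>
     continuous_on ({0<..} \<times> UNIV) (\<lambda>(t,x). \<phi>xx t x))"

definition visc_solution :: "(real \<Rightarrow> real) \<Rightarrow> (real \<Rightarrow> real \<Rightarrow> real) \<Rightarrow> bool" where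
  "visc_solution G u \<longleftrightarrow>
     continuous_on ({0..} \<times> UNIV) (\<lambda>(t,x). u t x) \<and>
     (\<forall>t>0. \<forall>x. \<forall>\<phi> \<phi>t \<phi>xx. C12_test \<phi> \<phi>t \<phi>xx \<longrightarrow>
         (\<forall>s>0. \<forall>y. u s y \<le> \<phi> s y) \<longrightarrow> \<phi> t x = u t x \<longrightarrow> \<phi>t t x - G (\<phi>xx t x) \<le> 0) \<and>
     (\<forall>t>0. \<forall>x. \<forall>\<phi> \<phi>t \<phi>xx. C12_test \<phi> \<phi>t \<phi>xx \<longrightarrow>
         (\<forall>s>0. \<forall>y. u s y \<ge> \<phi> s y) \<longrightarrow> \<phi> t x = u t x \<longrightarrow> \<phi>t t x - G (\<phi>xx t x) \<ge> 0)"

definition G_normal :: "(('b \<Rightarrow> real) \<Rightarrow> real) \<Rightarrow> ('b \<Rightarrow> real) \<Rightarrow> bool" where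
  "G_normal Et \<xi> \<longleftrightarrow> (\<forall>f. bLip1 f \<longrightarrow>
     visc_solution (Gfun Et \<xi>) (\<lambda>t x. Et (\<lambda>\<omega>. f (x + sqrt t * \<xi> \<omega>))) \<and>
     (\<forall>x. Et (\<lambda>\<omega>. f (x + sqrt 0 * \<xi> \<omega>)) = f x))"

definition song_bound ::
  "('a \<Rightarrow> real) set \<Rightarrow> (('a \<Rightarrow> real) \<Rightarrow> real) \<Rightarrow> (('b \<Rightarrow> real) \<Rightarrow> real) \<Rightarrow> ('b \<Rightarrow> real) \<Rightarrow> real \<Rightarrow> real \<Rightarrow> bool" where
  "song_bound H E Et \<xi> \<beta> \<alpha> \<longleftrightarrow> (\<exists>C>0. \<forall>Y. standing_seq H E \<beta> \<alpha> Y \<longrightarrow>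
     (\<forall>n\<ge>1. \<forall>g. bLip1_le1 g \<longrightarrow>
        \<bar>E (\<lambda>\<omega>. g (Wn E Y n \<omega>)) - Et (\<lambda>\<omega>. g (\<xi> \<omega>))\<bar> \<le>
        C * (MAX i\<in>{1..n}. E (\<lambda>\<omega>. \<bar>Y i \<omega>\<bar> powr (2 + \<alpha>)) / (sig E Y i) powr (2 + \<alpha>)
                              * (sig E Y i / Bn E Y n) powr \<alpha>)))"

end

theory Submission
  imports Defs
begin

text \<open>Since \<open>|Z_l| \<le> R\<close> and \<open>T_{n+1}^2 = T_n^2 + Z_{n+1}^2 + 2 \<Sum>_{l \<le> n} Z_l Z_{n+1}\<close>,
  sub-additivity reduces the claim to a bound on \<open>\<Sum>_{l \<le> n} E[Z_l Z_{n+1}]\<close> uniform in \<open>n\<close>.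
  For \<open>l < m\<close> and \<open>k = 4^l\<close> let \<open>Z'_m\<close> be \<open>Z_m\<close> with every \<open>S_i\<close> replaced by \<open>S_i - S_k\<close>.
  Then \<open>Z_l\<close> is a function of \<open>X_1, \<dots>, X_k\<close> and \<open>Z'_m\<close> of the later variables, so
  independence gives \<open>E[Z_l Z'_m] \<le> R (max(E[Z'_m], 0) + max(E[-Z'_m], 0))\<close>. These two means are
  bounded by the mean uncertainty \<open>E[f(W_i)] + E[-f(W_i)]\<close> on block \<open>m\<close>, which is
  \<open>O(2^(-\<alpha> m))\<close> by Song's bound because \<open>f \<in> \<H>\<close>, plus the replacement error
  \<open>|f(W_i) - f((S_i - S_k) / B_i)|\<close>, whose expectation is \<open>O(2^(l - m))\<close> by the truncated
  second moment bound \<open>E[min(S_k^2, r^2)] \<le> K k\<close>. Both are summable over \<open>l < m\<close>.\<close>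

section \<open>Bounded Lipschitz functions of finitely many variables\<close>

lemma bLip1I: "(\<And>x. \<bar>g x\<bar> \<le> B) \<Longrightarrow> (\<And>x y. \<bar>g x - g y\<bar> \<le> L * \<bar>x - y\<bar>) \<Longrightarrow> bLip1 g"
  unfolding bLip1_def by blast

lemma bLip1E:
  assumes "bLip1 g"
  obtains B L where "B \<ge> 0" "L > 0" "\<And>x. \<bar>g x\<bar> \<le> B" "\<And>x y. \<bar>g x - g y\<bar> \<le> L * \<bar>x - y\<bar>"
proof -
  from assms obtain B L where BL: "\<And>x y. \<bar>g x\<bar> \<le> B \<and> \<bar>g x - g y\<bar> \<le> L * \<bar>x - y\<bar>"
    unfolding bLip1_def by blast
  show ?thesis
  proof (rule that[of "max B 0" "max L 1"])
    fix x y
    have "L * \<bar>x - y\<bar> \<le> max L 1 * \<bar>x - y\<bar>" by (rule mult_right_mono) auto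
    then show "\<bar>g x - g y\<bar> \<le> max L 1 * \<bar>x - y\<bar>" using BL[of x y] by linarith
  next
    fix x show "\<bar>g x\<bar> \<le> max B 0" using BL[of x x] by auto
  qed auto
qed

lemma bLip_lenI:
  assumes "\<And>xs. length xs = N \<Longrightarrow> \<bar>\<phi> xs\<bar> \<le> B"
    and "\<And>xs ys. length xs = N \<Longrightarrow> length ys = N \<Longrightarrow>
           \<bar>\<phi> xs - \<phi> ys\<bar> \<le> L * (\<Sum>i<N. \<bar>xs ! i - ys ! i\<bar>)"
  shows "bLip_len N \<phi>"
  unfolding bLip_len_def using assms by blast

lemma bLip_lenE:
  assumes "bLip_len N \<phi>"
  obtains B L where "B \<ge> 0" "L \<ge> 0" "\<And>xs. length xs = N \<Longrightarrow> \<bar>\<phi> xs\<bar> \<le> B"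
    "\<And>xs ys. length xs = N \<Longrightarrow> length ys = N \<Longrightarrow>
       \<bar>\<phi> xs - \<phi> ys\<bar> \<le> L * (\<Sum>i<N. \<bar>xs ! i - ys ! i\<bar>)"
proof -
  from assms obtain B L where BL: "\<And>xs ys. length xs = N \<Longrightarrow> length ys = N \<Longrightarrow>
      \<bar>\<phi> xs\<bar> \<le> B \<and> \<bar>\<phi> xs - \<phi> ys\<bar> \<le> L * (\<Sum>i<N. \<bar>xs ! i - ys ! i\<bar>)"
    unfolding bLip_len_def by blast
  show ?thesis
  proof (rule that[of "max B 0" "max L 0"])
    fix xs :: "real list" assume "length xs = N"
    then show "\<bar>\<phi> xs\<bar> \<le> max B 0" using BL[of xs xs] by auto
  next
    fix xs ys :: "real list" assume l: "length xs = N" "length ys = N"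
    have "L * (\<Sum>i<N. \<bar>xs ! i - ys ! i\<bar>) \<le> max L 0 * (\<Sum>i<N. \<bar>xs ! i - ys ! i\<bar>)"
      by (rule mult_right_mono) (auto intro: sum_nonneg)
    then show "\<bar>\<phi> xs - \<phi> ys\<bar> \<le> max L 0 * (\<Sum>i<N. \<bar>xs ! i - ys ! i\<bar>)"
      using BL[OF l] by linarith
  qed auto
qed

lemma bLip_len_const: "bLip_len N (\<lambda>_. c)"
  by (rule bLip_lenI[of N _ "\<bar>c\<bar>" 0]) auto

lemma bLip_len_add:
  assumes "bLip_len N \<phi>" "bLip_len N \<psi>"
  shows "bLip_len N (\<lambda>xs. \<phi> xs + \<psi> xs)"
proof -
  obtain B1 L1 where 1: "\<And>xs. length xs = N \<Longrightarrow> \<bar>\<phi> xs\<bar> \<le> B1"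
    "\<And>xs ys. length xs = N \<Longrightarrow> length ys = N \<Longrightarrow>
       \<bar>\<phi> xs - \<phi> ys\<bar> \<le> L1 * (\<Sum>i<N. \<bar>xs ! i - ys ! i\<bar>)"
    using bLip_lenE[OF assms(1)] by metis
  obtain B2 L2 where 2: "\<And>xs. length xs = N \<Longrightarrow> \<bar>\<psi> xs\<bar> \<le> B2"
    "\<And>xs ys. length xs = N \<Longrightarrow> length ys = N \<Longrightarrow>
       \<bar>\<psi> xs - \<psi> ys\<bar> \<le> L2 * (\<Sum>i<N. \<bar>xs ! i - ys ! i\<bar>)"
    using bLip_lenE[OF assms(2)] by metis
  show ?thesis
  proof (rule bLip_lenI[of N _ "B1 + B2" "L1 + L2"])
    fix xs :: "real list" assume "length xs = N"
    then show "\<bar>\<phi> xs + \<psi> xs\<bar> \<le> B1 + B2" using 1 2 by (smt (verit))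
  next
    fix xs ys :: "real list" assume l: "length xs = N" "length ys = N"
    show "\<bar>\<phi> xs + \<psi> xs - (\<phi> ys + \<psi> ys)\<bar> \<le> (L1 + L2) * (\<Sum>i<N. \<bar>xs ! i - ys ! i\<bar>)"
      using 1(2)[OF l] 2(2)[OF l] by (simp add: distrib_right)
  qed
qed

lemma bLip_len_mult:
  assumes "bLip_len N \<phi>" "bLip_len N \<psi>"
  shows "bLip_len N (\<lambda>xs. \<phi> xs * \<psi> xs)"
proof -
  obtain B1 L1 where 1: "B1 \<ge> 0" "L1 \<ge> 0" "\<And>xs. length xs = N \<Longrightarrow> \<bar>\<phi> xs\<bar> \<le> B1"
    "\<And>xs ys. length xs = N \<Longrightarrow> length ys = N \<Longrightarrow>
       \<bar>\<phi> xs - \<phi> ys\<bar> \<le> L1 * (\<Sum>i<N. \<bar>xs ! i - ys ! i\<bar>)"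
    using bLip_lenE[OF assms(1)] by metis
  obtain B2 L2 where 2: "B2 \<ge> 0" "L2 \<ge> 0" "\<And>xs. length xs = N \<Longrightarrow> \<bar>\<psi> xs\<bar> \<le> B2"
    "\<And>xs ys. length xs = N \<Longrightarrow> length ys = N \<Longrightarrow>
       \<bar>\<psi> xs - \<psi> ys\<bar> \<le> L2 * (\<Sum>i<N. \<bar>xs ! i - ys ! i\<bar>)"
    using bLip_lenE[OF assms(2)] by metis
  show ?thesis
  proof (rule bLip_lenI[of N _ "B1 * B2" "B1 * L2 + B2 * L1"])
    fix xs :: "real list" assume "length xs = N"
    then show "\<bar>\<phi> xs * \<psi> xs\<bar> \<le> B1 * B2" using 1 2 by (simp add: abs_mult mult_mono)
  next
    fix xs ys :: "real list" assume l: "length xs = N" "length ys = N"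
    define d where "d = (\<Sum>i<N. \<bar>xs ! i - ys ! i\<bar>)"
    have "\<phi> xs * \<psi> xs - \<phi> ys * \<psi> ys = \<phi> xs * (\<psi> xs - \<psi> ys) + \<psi> ys * (\<phi> xs - \<phi> ys)"
      by (simp add: algebra_simps)
    then have "\<bar>\<phi> xs * \<psi> xs - \<phi> ys * \<psi> ys\<bar> \<le> \<bar>\<phi> xs\<bar> * \<bar>\<psi> xs - \<psi> ys\<bar> + \<bar>\<psi> ys\<bar> * \<bar>\<phi> xs - \<phi> ys\<bar>"
      by (metis abs_mult abs_triangle_ineq)
    also have "\<dots> \<le> B1 * (L2 * d) + B2 * (L1 * d)"
      using 1 2 l unfolding d_def by (intro add_mono mult_mono) (auto intro: sum_nonneg)
    finally show "\<bar>\<phi> xs * \<psi> xs - \<phi> ys * \<psi> ys\<bar> \<le> (B1 * L2 + B2 * L1) * (\<Sum>i<N. \<bar>xs ! i - ys ! i\<bar>)"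
      unfolding d_def by (simp add: algebra_simps)
  qed
qed

lemma bLip_len_sum:
  "finite A \<Longrightarrow> (\<And>a. a \<in> A \<Longrightarrow> bLip_len N (F a)) \<Longrightarrow> bLip_len N (\<lambda>xs. \<Sum>a\<in>A. F a xs)"
proof (induction A rule: finite_induct)
  case empty then show ?case using bLip_len_const[of N 0] by simp
next
  case (insert x A) then show ?case using bLip_len_add[of N "F x"] by simp
qed

lemma bLip_len_comp_partial_sum:
  assumes g: "bLip1 g" and J: "J \<subseteq> {..<N}"
  shows "bLip_len N (\<lambda>xs. g (\<Sum>j\<in>J. xs ! j))"
proof -
  obtain B L where BL: "L > 0" "\<And>x. \<bar>g x\<bar> \<le> B" "\<And>x y. \<bar>g x - g y\<bar> \<le> L * \<bar>x - y\<bar>"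
    using bLip1E[OF g] by metis
  show ?thesis
  proof (rule bLip_lenI[of N _ B L])
    fix xs ys :: "real list"
    have "\<bar>(\<Sum>j\<in>J. xs ! j) - (\<Sum>j\<in>J. ys ! j)\<bar> = \<bar>\<Sum>j\<in>J. xs ! j - ys ! j\<bar>"
      by (simp add: sum_subtractf)
    also have "\<dots> \<le> (\<Sum>j\<in>J. \<bar>xs ! j - ys ! j\<bar>)" by (rule sum_abs)
    also have "\<dots> \<le> (\<Sum>j<N. \<bar>xs ! j - ys ! j\<bar>)" by (rule sum_mono2) (use J in auto)
    finally show "\<bar>g (\<Sum>j\<in>J. xs ! j) - g (\<Sum>j\<in>J. ys ! j)\<bar> \<le> L * (\<Sum>i<N. \<bar>xs ! i - ys ! i\<bar>)"
      using BL(3)[of "\<Sum>j\<in>J. xs ! j" "\<Sum>j\<in>J. ys ! j"] mult_left_mono[OF _ less_imp_le[OF BL(1)]]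
      by (meson order_trans)
  qed (use BL in auto)
qed

lemma sum_abs_diff_snoc:
  assumes "length zs = N" "length ws = N"
  shows "(\<Sum>i<Suc N. \<bar>(zs @ [y]) ! i - (ws @ [y']) ! i\<bar>) = (\<Sum>i<N. \<bar>zs ! i - ws ! i\<bar>) + \<bar>y - y'\<bar>"
  using assms by (simp add: nth_append)

lemma bLip1_snoc:
  assumes "bLip_len (Suc N) \<Phi>" "length zs = N"
  shows "bLip1 (\<lambda>y. \<Phi> (zs @ [y]))"
proof -
  obtain B L where BL: "\<And>xs. length xs = Suc N \<Longrightarrow> \<bar>\<Phi> xs\<bar> \<le> B"
    "\<And>xs ys. length xs = Suc N \<Longrightarrow> length ys = Suc N \<Longrightarrow>
       \<bar>\<Phi> xs - \<Phi> ys\<bar> \<le> L * (\<Sum>i<Suc N. \<bar>xs ! i - ys ! i\<bar>)"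
    using bLip_lenE[OF assms(1)] by metis
  show ?thesis
  proof (rule bLip1I[of _ B L])
    fix x show "\<bar>\<Phi> (zs @ [x])\<bar> \<le> B" using BL(1) assms(2) by simp
  next
    fix x y
    show "\<bar>\<Phi> (zs @ [x]) - \<Phi> (zs @ [y])\<bar> \<le> L * \<bar>x - y\<bar>"
      using BL(2)[of "zs @ [x]" "zs @ [y]"] sum_abs_diff_snoc[OF assms(2) assms(2), of x y] assms(2)
      by simp
  qed
qed

lemma bLip_len_replace_prefix:
  assumes "bLip_len N \<Phi>" "length c = k" "k \<le> N"
  shows "bLip_len N (\<lambda>zs. \<Phi> (c @ drop k zs))"
proof -
  obtain B L where BL: "L \<ge> 0" "\<And>xs. length xs = N \<Longrightarrow> \<bar>\<Phi> xs\<bar> \<le> B"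
    "\<And>xs ys. length xs = N \<Longrightarrow> length ys = N \<Longrightarrow>
       \<bar>\<Phi> xs - \<Phi> ys\<bar> \<le> L * (\<Sum>i<N. \<bar>xs ! i - ys ! i\<bar>)"
    using bLip_lenE[OF assms(1)] by metis
  show ?thesis
  proof (rule bLip_lenI[of N _ B L])
    fix xs :: "real list" assume "length xs = N"
    then show "\<bar>\<Phi> (c @ drop k xs)\<bar> \<le> B" using BL assms by simp
  next
    fix xs ys :: "real list" assume l: "length xs = N" "length ys = N"
    have "(\<Sum>i<N. \<bar>(c @ drop k xs) ! i - (c @ drop k ys) ! i\<bar>) \<le> (\<Sum>i<N. \<bar>xs ! i - ys ! i\<bar>)"
    proof (rule sum_mono)
      fix i assume "i \<in> {..<N}"
      show "\<bar>(c @ drop k xs) ! i - (c @ drop k ys) ! i\<bar> \<le> \<bar>xs ! i - ys ! i\<bar>"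
        using l assms(2,3) by (cases "i < k") (auto simp: nth_append)
    qed
    then show "\<bar>\<Phi> (c @ drop k xs) - \<Phi> (c @ drop k ys)\<bar> \<le> L * (\<Sum>i<N. \<bar>xs ! i - ys ! i\<bar>)"
      using BL(3)[of "c @ drop k xs" "c @ drop k ys"] l assms mult_left_mono[OF _ BL(1)]
      by (smt (verit) length_append length_drop le_add_diff_inverse)
  qed
qed

lemma abs_min_square_diff_le:
  fixes x y r :: real
  shows "\<bar>min (x\<^sup>2) (r\<^sup>2) - min (y\<^sup>2) (r\<^sup>2)\<bar> \<le> 2 * \<bar>r\<bar> * \<bar>x - y\<bar>"
proof -
  define u where "u = min \<bar>x\<bar> \<bar>r\<bar>"
  define v where "v = min \<bar>y\<bar> \<bar>r\<bar>"
  have eu: "min (x\<^sup>2) (r\<^sup>2) = u\<^sup>2" unfolding u_def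
    by (metis abs_ge_zero min_def power2_abs power_mono min.absorb_iff1 abs_le_square_iff)
  have ev: "min (y\<^sup>2) (r\<^sup>2) = v\<^sup>2" unfolding v_def
    by (metis abs_ge_zero min_def power2_abs power_mono min.absorb_iff1 abs_le_square_iff)
  have "\<bar>u\<^sup>2 - v\<^sup>2\<bar> = \<bar>u - v\<bar> * \<bar>u + v\<bar>"
    by (simp add: power2_eq_square algebra_simps abs_mult[symmetric])
  also have "\<dots> \<le> \<bar>x - y\<bar> * (2 * \<bar>r\<bar>)"
  proof (rule mult_mono)
    show "\<bar>u - v\<bar> \<le> \<bar>x - y\<bar>" unfolding u_def v_def by (auto simp: min_def abs_if split: if_splits)
    show "\<bar>u + v\<bar> \<le> 2 * \<bar>r\<bar>" unfolding u_def v_def by (auto simp: min_def)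
  qed auto
  finally show ?thesis using eu ev by (simp add: algebra_simps)
qed

lemma bLip1_min_square: "bLip1 (\<lambda>y. min (y\<^sup>2) (r\<^sup>2))"
  by (rule bLip1I[of _ "r\<^sup>2" "2 * \<bar>r\<bar>"]) (auto simp: abs_min_square_diff_le)

lemma bLip1_shift:
  assumes "bLip1 g"
  shows "bLip1 (\<lambda>y. g (t + y))"
proof -
  from assms obtain B L where B: "\<And>x. \<bar>g x\<bar> \<le> B" and L: "\<And>x y. \<bar>g x - g y\<bar> \<le> L * \<bar>x - y\<bar>"
    unfolding bLip1_def by blast
  show ?thesis by (rule bLip1I[of _ B L]) (use B L[of "t + _" "t + _"] in simp_all)
qed

section \<open>Sub-linear expectations\<close>

locale sublinear_expectation =
  fixes M :: "'a measure" and H :: "('a \<Rightarrow> real) set" and E :: "('a \<Rightarrow> real) \<Rightarrow> real"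
  assumes sublinear: "sublinear_space M H E"
begin

lemma closed_add: "X \<in> H \<Longrightarrow> Y \<in> H \<Longrightarrow> (\<lambda>\<omega>. X \<omega> + Y \<omega>) \<in> H"
  using sublinear by (simp add: sublinear_space_def)

lemma closed_scale: "X \<in> H \<Longrightarrow> (\<lambda>\<omega>. c * X \<omega>) \<in> H"
  using sublinear by (simp add: sublinear_space_def)

lemma closed_bLip_len:
  "set Xs \<subseteq> H \<Longrightarrow> bLip_len (length Xs) \<phi> \<Longrightarrow> (\<lambda>\<omega>. \<phi> (map (\<lambda>X. X \<omega>) Xs)) \<in> H"
  using sublinear by (simp add: sublinear_space_def)

lemma E_mono: "X \<in> H \<Longrightarrow> Y \<in> H \<Longrightarrow> (\<And>\<omega>. X \<omega> \<le> Y \<omega>) \<Longrightarrow> E X \<le> E Y"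
  using sublinear by (simp add: sublinear_space_def)

lemma E_const [simp]: "E (\<lambda>_. c) = c"
  using sublinear by (simp add: sublinear_space_def)

lemma E_subadd: "X \<in> H \<Longrightarrow> Y \<in> H \<Longrightarrow> E (\<lambda>\<omega>. X \<omega> + Y \<omega>) \<le> E X + E Y"
  using sublinear by (simp add: sublinear_space_def)

lemma E_pos_hom: "X \<in> H \<Longrightarrow> c \<ge> 0 \<Longrightarrow> E (\<lambda>\<omega>. c * X \<omega>) = c * E X"
  using sublinear by (simp add: sublinear_space_def)

lemma closed_const: "(\<lambda>_. c) \<in> H"
  using closed_bLip_len[of "[]" "\<lambda>_. c"] bLip_len_const by simp

lemma closed_comp: assumes "bLip1 g" "Y \<in> H" shows "(\<lambda>\<omega>. g (Y \<omega>)) \<in> H"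
proof -
  from assms(1) obtain B L where "\<And>x. \<bar>g x\<bar> \<le> B" "\<And>x y. \<bar>g x - g y\<bar> \<le> L * \<bar>x - y\<bar>"
    unfolding bLip1_def by blast
  then have "bLip_len (length [Y]) (\<lambda>xs. g (xs ! 0))"
    by (intro bLip_lenI[of _ _ B L]) simp_all
  from closed_bLip_len[OF _ this] assms(2) show ?thesis by simp
qed

lemma closed_uminus: "X \<in> H \<Longrightarrow> (\<lambda>\<omega>. - X \<omega>) \<in> H"
  using closed_scale[of X "-1"] by simp

lemma closed_diff: "X \<in> H \<Longrightarrow> Y \<in> H \<Longrightarrow> (\<lambda>\<omega>. X \<omega> - Y \<omega>) \<in> H"
  using closed_add[OF _ closed_uminus, of X Y] by simp

lemma closed_divide: "X \<in> H \<Longrightarrow> (\<lambda>\<omega>. X \<omega> / c) \<in> H"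
  using closed_scale[of X "1/c"] by simp

lemma closed_add_const: "X \<in> H \<Longrightarrow> (\<lambda>\<omega>. X \<omega> + c) \<in> H"
  using closed_add[OF _ closed_const] by simp

lemma closed_sum: "finite A \<Longrightarrow> (\<And>a. a \<in> A \<Longrightarrow> F a \<in> H) \<Longrightarrow> (\<lambda>\<omega>. \<Sum>a\<in>A. F a \<omega>) \<in> H"
proof (induction A rule: finite_induct)
  case empty then show ?case using closed_const[of 0] by simp
next
  case (insert x A) then show ?case using closed_add[of "F x"] by simp
qed

lemma closed_mult_bounded:
  assumes "U \<in> H" "V \<in> H" "\<And>\<omega>. \<bar>U \<omega>\<bar> \<le> C" "\<And>\<omega>. \<bar>V \<omega>\<bar> \<le> C"
  shows "(\<lambda>\<omega>. U \<omega> * V \<omega>) \<in> H"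
proof -
  define cl where "cl t = max (- C) (min C t)" for t
  have C: "C \<ge> 0" using assms(3)[of undefined] by linarith
  have cl_abs: "\<bar>cl t\<bar> \<le> C" for t unfolding cl_def using C by auto
  have cl_lip: "\<bar>cl t - cl s\<bar> \<le> \<bar>t - s\<bar>" for t s unfolding cl_def by auto
  define \<phi> where "\<phi> xs = cl (xs ! 0) * cl (xs ! 1)" for xs :: "real list"
  have "bLip_len 2 \<phi>"
  proof (rule bLip_lenI[of 2 _ "C * C" "2 * C"])
    fix xs :: "real list" show "\<bar>\<phi> xs\<bar> \<le> C * C"
      unfolding \<phi>_def by (simp add: abs_mult cl_abs mult_mono C)
  next
    fix xs ys :: "real list"
    have "\<phi> xs - \<phi> ys = cl (xs ! 0) * (cl (xs ! 1) - cl (ys ! 1)) + cl (ys ! 1) * (cl (xs ! 0) - cl (ys ! 0))"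
      unfolding \<phi>_def by (simp add: algebra_simps)
    then have "\<bar>\<phi> xs - \<phi> ys\<bar> \<le> \<bar>cl (xs ! 0)\<bar> * \<bar>cl (xs ! 1) - cl (ys ! 1)\<bar> + \<bar>cl (ys ! 1)\<bar> * \<bar>cl (xs ! 0) - cl (ys ! 0)\<bar>"
      by (metis abs_mult abs_triangle_ineq)
    also have "\<dots> \<le> C * \<bar>xs ! 1 - ys ! 1\<bar> + C * \<bar>xs ! 0 - ys ! 0\<bar>"
      by (intro add_mono mult_mono) (auto simp: cl_abs cl_lip C)
    also have "\<dots> = 2 * C * (\<Sum>i<2. \<bar>xs ! i - ys ! i\<bar>) / 2 * 2 / 2"
      by (simp add: numeral_2_eq_2 algebra_simps)
    also have "\<dots> \<le> 2 * C * (\<Sum>i<2. \<bar>xs ! i - ys ! i\<bar>)"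
      using C by (simp add: sum_nonneg)
    finally show "\<bar>\<phi> xs - \<phi> ys\<bar> \<le> 2 * C * (\<Sum>i<2. \<bar>xs ! i - ys ! i\<bar>)" .
  qed
  then have "(\<lambda>\<omega>. \<phi> (map (\<lambda>X. X \<omega>) [U, V])) \<in> H"
    using closed_bLip_len[of "[U, V]" \<phi>] assms(1,2) by (simp add: numeral_2_eq_2)
  moreover have "cl t = t" if "\<bar>t\<bar> \<le> C" for t
    using that unfolding cl_def by auto
  then have "\<phi> (map (\<lambda>X. X \<omega>) [U, V]) = U \<omega> * V \<omega>" for \<omega>
    unfolding \<phi>_def using assms(3,4) by simp
  ultimately show ?thesis by simp
qed

lemma E_sum_le:
  "finite A \<Longrightarrow> (\<And>a. a \<in> A \<Longrightarrow> F a \<in> H) \<Longrightarrow> E (\<lambda>\<omega>. \<Sum>a\<in>A. F a \<omega>) \<le> (\<Sum>a\<in>A. E (F a))"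
proof (induction A rule: finite_induct)
  case empty then show ?case by simp
next
  case (insert x A)
  have "E (\<lambda>\<omega>. \<Sum>a\<in>insert x A. F a \<omega>) = E (\<lambda>\<omega>. F x \<omega> + (\<Sum>a\<in>A. F a \<omega>))"
    using insert by simp
  also have "\<dots> \<le> E (F x) + E (\<lambda>\<omega>. \<Sum>a\<in>A. F a \<omega>)"
    using E_subadd[of "F x" "\<lambda>\<omega>. \<Sum>a\<in>A. F a \<omega>"] closed_sum[of A F] insert by simp
  also have "\<dots> \<le> (\<Sum>a\<in>insert x A. E (F a))" using insert by simp
  finally show ?case .
qed

lemma E_add_const: assumes "X \<in> H" shows "E (\<lambda>\<omega>. X \<omega> + c) = E X + c"
proof -
  have "E (\<lambda>\<omega>. X \<omega> + c) \<le> E X + c"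
    using E_subadd[OF assms closed_const[of c]] by simp
  moreover have "E X \<le> E (\<lambda>\<omega>. X \<omega> + c) - c"
    using E_subadd[OF closed_add_const[OF assms, of c] closed_const[of "-c"]] by simp
  ultimately show ?thesis by simp
qed

lemma E_divide: assumes "X \<in> H" "r > 0" shows "E (\<lambda>\<omega>. X \<omega> / r) = E X / r"
  using E_pos_hom[OF assms(1), of "1 / r"] assms(2) by simp

lemma E_scale_mean_zero:
  assumes "X \<in> H" "E X = 0" "E (\<lambda>\<omega>. - X \<omega>) = 0"
  shows "E (\<lambda>\<omega>. c * X \<omega>) = 0"
proof (cases "c \<ge> 0")
  case True then show ?thesis using E_pos_hom[OF assms(1) True] assms(2) by simp
next
  case False
  have "E (\<lambda>\<omega>. c * X \<omega>) = E (\<lambda>\<omega>. (- c) * (- X \<omega>))" by simp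
  also have "\<dots> = 0" using E_pos_hom[OF closed_uminus[OF assms(1)], of "- c"] False assms(3) by simp
  finally show ?thesis .
qed

lemma E_le_const: "X \<in> H \<Longrightarrow> (\<And>\<omega>. X \<omega> \<le> c) \<Longrightarrow> E X \<le> c"
  using E_mono[OF _ closed_const, of X c] by simp

lemma E_ge_const: "X \<in> H \<Longrightarrow> (\<And>\<omega>. c \<le> X \<omega>) \<Longrightarrow> c \<le> E X"
  using E_mono[OF closed_const, of X c] by simp

lemma E_abs_le:
  assumes "X \<in> H" "\<And>\<omega>. \<bar>X \<omega>\<bar> \<le> B"
  shows "\<bar>E X\<bar> \<le> B"
proof -
  have "E X \<le> B" by (rule E_le_const[OF assms(1)]) (rule abs_le_D1[OF assms(2)])
  moreover have "- B \<le> E X"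
    by (rule E_ge_const[OF assms(1)]) (metis abs_le_D2 assms(2) minus_le_iff)
  ultimately show ?thesis by simp
qed

lemma E_le_add_const: "X \<in> H \<Longrightarrow> Y \<in> H \<Longrightarrow> (\<And>\<omega>. X \<omega> \<le> Y \<omega> + d) \<Longrightarrow> E X \<le> E Y + d"
  using E_mono[OF _ closed_add_const, of X Y d] E_add_const[of Y d] by simp

lemma E_diff_abs_le:
  "X \<in> H \<Longrightarrow> Y \<in> H \<Longrightarrow> (\<And>\<omega>. \<bar>X \<omega> - Y \<omega>\<bar> \<le> d) \<Longrightarrow> \<bar>E X - E Y\<bar> \<le> d"
  using E_le_add_const[of X Y d] E_le_add_const[of Y X d] by (smt (verit, best))

lemma E_mult_le_mean_parts:
  assumes "\<bar>g\<bar> \<le> R" "U \<in> H"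
  shows "E (\<lambda>\<omega>. g * U \<omega>) \<le> R * (max (E U) 0 + max (E (\<lambda>\<omega>. - U \<omega>)) 0)"
proof -
  have R: "0 \<le> R * max (E U) 0" "0 \<le> R * max (E (\<lambda>\<omega>. - U \<omega>)) 0"
    using assms(1) by simp_all
  show ?thesis
  proof (cases "g \<ge> 0")
    case True
    have "E (\<lambda>\<omega>. g * U \<omega>) = g * E U" by (rule E_pos_hom[OF assms(2) True])
    also have "\<dots> \<le> g * max (E U) 0" using True by (intro mult_left_mono) auto
    also have "\<dots> \<le> R * max (E U) 0" using assms(1) by (intro mult_right_mono) auto
    finally show ?thesis using R unfolding distrib_left by linarith
  next
    case False
    have "E (\<lambda>\<omega>. g * U \<omega>) = E (\<lambda>\<omega>. (- g) * (- U \<omega>))" by simp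
    also have "\<dots> = (- g) * E (\<lambda>\<omega>. - U \<omega>)"
      using False by (intro E_pos_hom[OF closed_uminus[OF assms(2)]]) auto
    also have "\<dots> \<le> (- g) * max (E (\<lambda>\<omega>. - U \<omega>)) 0" using False by (intro mult_left_mono) auto
    also have "\<dots> \<le> R * max (E (\<lambda>\<omega>. - U \<omega>)) 0" using assms(1) by (intro mult_right_mono) auto
    finally show ?thesis using R unfolding distrib_left by linarith
  qed
qed

lemma bLip1_E_param:
  assumes "\<And>t. F t \<in> H" "\<And>t \<omega>. \<bar>F t \<omega>\<bar> \<le> B" "\<And>t s \<omega>. \<bar>F t \<omega> - F s \<omega>\<bar> \<le> L * \<bar>t - s\<bar>"
  shows "bLip1 (\<lambda>t. E (F t))"
  using assms by (intro bLip1I[of _ B L]) (simp_all add: E_abs_le E_diff_abs_le)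

lemma bLip_len_E_snoc:
  assumes "bLip_len (Suc N) \<Phi>" "Y \<in> H"
  shows "bLip_len N (\<lambda>zs. E (\<lambda>\<omega>. \<Phi> (zs @ [Y \<omega>])))"
proof -
  obtain B L where BL: "\<And>xs. length xs = Suc N \<Longrightarrow> \<bar>\<Phi> xs\<bar> \<le> B"
    "\<And>xs ys. length xs = Suc N \<Longrightarrow> length ys = Suc N \<Longrightarrow>
       \<bar>\<Phi> xs - \<Phi> ys\<bar> \<le> L * (\<Sum>i<Suc N. \<bar>xs ! i - ys ! i\<bar>)"
    using bLip_lenE[OF assms(1)] by metis
  have in_H: "(\<lambda>\<omega>. \<Phi> (zs @ [Y \<omega>])) \<in> H" if "length zs = N" for zs
    by (rule closed_comp[OF bLip1_snoc[OF assms(1) that] assms(2)])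
  show ?thesis
  proof (rule bLip_lenI[of N _ B L])
    fix xs :: "real list" assume "length xs = N"
    then show "\<bar>E (\<lambda>\<omega>. \<Phi> (xs @ [Y \<omega>]))\<bar> \<le> B" using E_abs_le[OF in_H] BL(1) by simp
  next
    fix xs ys :: "real list" assume l: "length xs = N" "length ys = N"
    show "\<bar>E (\<lambda>\<omega>. \<Phi> (xs @ [Y \<omega>])) - E (\<lambda>\<omega>. \<Phi> (ys @ [Y \<omega>]))\<bar> \<le> L * (\<Sum>i<N. \<bar>xs ! i - ys ! i\<bar>)"
    proof (rule E_diff_abs_le[OF in_H[OF l(1)] in_H[OF l(2)]])
      fix \<omega>
      show "\<bar>\<Phi> (xs @ [Y \<omega>]) - \<Phi> (ys @ [Y \<omega>])\<bar> \<le> L * (\<Sum>i<N. \<bar>xs ! i - ys ! i\<bar>)"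
        using BL(2)[of "xs @ [Y \<omega>]" "ys @ [Y \<omega>]"] sum_abs_diff_snoc[OF l, of "Y \<omega>" "Y \<omega>"] l by simp
    qed
  qed
qed

lemma bLip1_E_min_square_shift:
  assumes "Y \<in> H"
  shows "bLip1 (\<lambda>t. E (\<lambda>\<omega>. min ((t + Y \<omega>)\<^sup>2) (r\<^sup>2)))"
proof (rule bLip1_E_param[where B = "r\<^sup>2" and L = "2 * \<bar>r\<bar>"])
  show "(\<lambda>\<omega>. min ((t + Y \<omega>)\<^sup>2) (r\<^sup>2)) \<in> H" for t
    by (rule closed_comp[OF bLip1_shift[OF bLip1_min_square] assms])
  show "\<bar>min ((t + Y \<omega>)\<^sup>2) (r\<^sup>2) - min ((s + Y \<omega>)\<^sup>2) (r\<^sup>2)\<bar> \<le> 2 * \<bar>r\<bar> * \<bar>t - s\<bar>" for t s \<omega>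
    using abs_min_square_diff_le[of "t + Y \<omega>" r "s + Y \<omega>"] by simp
qed simp

lemma E_min_square_shift_le:
  assumes "Y \<in> H" "(\<lambda>\<omega>. (Y \<omega>)\<^sup>2) \<in> H" "E (\<lambda>\<omega>. (Y \<omega>)\<^sup>2) \<le> K" "K \<ge> 0"
    and "\<And>c. E (\<lambda>\<omega>. c * Y \<omega>) = 0"
  shows "E (\<lambda>\<omega>. min ((t + Y \<omega>)\<^sup>2) (r\<^sup>2)) \<le> min (t\<^sup>2) (r\<^sup>2) + K"
proof -
  have in_H: "(\<lambda>\<omega>. min ((t + Y \<omega>)\<^sup>2) (r\<^sup>2)) \<in> H"
    using closed_comp[OF bLip1_shift[OF bLip1_min_square] assms(1)] .
  show ?thesis
  proof (cases "r\<^sup>2 \<le> t\<^sup>2")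
    case True
    have "E (\<lambda>\<omega>. min ((t + Y \<omega>)\<^sup>2) (r\<^sup>2)) \<le> r\<^sup>2" by (rule E_le_const[OF in_H]) simp
    then show ?thesis using True assms(4) by simp
  next
    case False
    have lin_H: "(\<lambda>\<omega>. (2 * t) * Y \<omega> + (Y \<omega>)\<^sup>2) \<in> H"
      by (rule closed_add[OF closed_scale[OF assms(1)] assms(2)])
    have "E (\<lambda>\<omega>. min ((t + Y \<omega>)\<^sup>2) (r\<^sup>2)) \<le> E (\<lambda>\<omega>. (2 * t) * Y \<omega> + (Y \<omega>)\<^sup>2) + t\<^sup>2"
      by (rule E_le_add_const[OF in_H lin_H]) (simp add: power2_eq_square algebra_simps)
    also have "\<dots> \<le> E (\<lambda>\<omega>. (2 * t) * Y \<omega>) + E (\<lambda>\<omega>. (Y \<omega>)\<^sup>2) + t\<^sup>2"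
      using E_subadd[OF closed_scale[OF assms(1)] assms(2)] by simp
    also have "\<dots> \<le> K + t\<^sup>2" using assms(3,5) by simp
    finally show ?thesis using False by simp
  qed
qed

end

section \<open>Independent sequences\<close>

definition values_upto :: "(nat \<Rightarrow> 'a \<Rightarrow> real) \<Rightarrow> nat \<Rightarrow> 'a \<Rightarrow> real list" where
  "values_upto X N \<omega> = map (\<lambda>j. X j \<omega>) [1..<Suc N]"

lemma length_values_upto [simp]: "length (values_upto X N \<omega>) = N"
  by (simp add: values_upto_def del: upt_Suc)

lemma nth_values_upto: "j < N \<Longrightarrow> values_upto X N \<omega> ! j = X (Suc j) \<omega>"
  by (simp add: values_upto_def del: upt_Suc)

lemma values_upto_Suc: "values_upto X (Suc N) \<omega> = values_upto X N \<omega> @ [X (Suc N) \<omega>]"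
  by (simp add: values_upto_def)

lemma sum_values_upto: "i \<le> N \<Longrightarrow> (\<Sum>j<i. values_upto X N \<omega> ! j) = Sn X i \<omega>"
  using sum_bounds_lt_plus1[of "\<lambda>j. X j \<omega>" i] by (simp add: nth_values_upto Sn_def)

lemma sum_values_upto_from:
  assumes "k \<le> i" "i \<le> N"
  shows "(\<Sum>j\<in>{k..<i}. values_upto X N \<omega> ! j) = Sn X i \<omega> - Sn X k \<omega>"
proof -
  have split: "{..<i} = {..<k} \<union> {k..<i}" using assms by auto
  have "(\<Sum>j<i. values_upto X N \<omega> ! j) =
      (\<Sum>j<k. values_upto X N \<omega> ! j) + (\<Sum>j\<in>{k..<i}. values_upto X N \<omega> ! j)"
    unfolding split by (rule sum.union_disjoint) auto
  then show ?thesis using sum_values_upto[of i N X \<omega>] sum_values_upto[of k N X \<omega>] assms by simp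
qed

lemma sum_snoc: "length zs = N \<Longrightarrow> (\<Sum>i<Suc N. (zs @ [y]) ! i) = (\<Sum>i<N. zs ! i) + y"
  by (simp add: nth_append)

locale indep_sequence = sublinear_expectation +
  fixes X :: "nat \<Rightarrow> 'a \<Rightarrow> real"
  assumes X_in_H: "\<And>j. 1 \<le> j \<Longrightarrow> X j \<in> H"
    and indep: "indep_seq E X"
begin

lemma closed_values_upto:
  assumes "bLip_len N \<Phi>"
  shows "(\<lambda>\<omega>. \<Phi> (values_upto X N \<omega>)) \<in> H"
proof -
  have "set (map X [1..<Suc N]) \<subseteq> H" using X_in_H by auto
  from closed_bLip_len[OF this] assms show ?thesis
    by (simp add: values_upto_def comp_def del: upt_Suc)
qed

lemma Sn_in_H: "Sn X k \<in> H"
  unfolding Sn_def by (rule closed_sum) (auto intro: X_in_H)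

lemma Wn_in_H: "Wn E X k \<in> H"
  unfolding Wn_def by (rule closed_divide[OF Sn_in_H])

lemma E_indep_last:
  assumes "1 \<le> N" "bLip_len (Suc N) \<phi>"
  shows "E (\<lambda>\<omega>. \<phi> (values_upto X N \<omega> @ [X (Suc N) \<omega>])) =
         E (\<lambda>\<omega>. E (\<lambda>\<omega>'. \<phi> (values_upto X N \<omega> @ [X (Suc N) \<omega>'])))"
proof -
  have "indep_of E (map X [1..<Suc N]) (X (Suc N))"
    using indep assms(1) unfolding indep_seq_def by blast
  then show ?thesis
    using assms(2) unfolding indep_of_def by (simp add: values_upto_def comp_def del: upt_Suc)
qed

text \<open>Proved by integrating out the last coordinates one at a time, using independence.\<close>

lemma E_le_by_freezing_prefix:
  assumes "1 \<le> k"
  shows "bLip_len (k + d) \<Phi> \<Longrightarrow>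
    (\<And>c. length c = k \<Longrightarrow> E (\<lambda>\<omega>. \<Phi> (c @ drop k (values_upto X (k + d) \<omega>))) \<le> D) \<Longrightarrow>
    E (\<lambda>\<omega>. \<Phi> (values_upto X (k + d) \<omega>)) \<le> D"
proof (induction d arbitrary: \<Phi>)
  case 0
  then have "\<Phi> c \<le> D" if "length c = k" for c
    using that by simp
  then show ?case using E_le_const[OF closed_values_upto[OF 0(1)]] by simp
next
  case (Suc d)
  define N where "N = k + d"
  have N: "1 \<le> N" "k \<le> N" using assms by (auto simp: N_def)
  have \<Phi>: "bLip_len (Suc N) \<Phi>" using Suc.prems(1) by (simp add: N_def)
  define \<Phi>' where "\<Phi>' zs = E (\<lambda>\<omega>'. \<Phi> (zs @ [X (Suc N) \<omega>']))" for zs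
  have \<Phi>': "bLip_len N \<Phi>'"
    unfolding \<Phi>'_def by (rule bLip_len_E_snoc[OF \<Phi> X_in_H]) simp
  have "E (\<lambda>\<omega>. \<Phi>' (c @ drop k (values_upto X N \<omega>))) \<le> D" if c: "length c = k" for c
  proof -
    have c\<Phi>: "bLip_len (Suc N) (\<lambda>zs. \<Phi> (c @ drop k zs))"
      using bLip_len_replace_prefix[OF \<Phi> c] N by simp
    have "E (\<lambda>\<omega>. \<Phi>' (c @ drop k (values_upto X N \<omega>))) =
        E (\<lambda>\<omega>. E (\<lambda>\<omega>'. \<Phi> (c @ drop k (values_upto X N \<omega> @ [X (Suc N) \<omega>']))))"
      unfolding \<Phi>'_def using N by simp
    also have "\<dots> = E (\<lambda>\<omega>. \<Phi> (c @ drop k (values_upto X N \<omega> @ [X (Suc N) \<omega>])))"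
      using E_indep_last[OF N(1) c\<Phi>] by simp
    also have "\<dots> \<le> D"
      using Suc.prems(2)[OF c] by (simp add: N_def values_upto_Suc)
    finally show ?thesis .
  qed
  then have "E (\<lambda>\<omega>. \<Phi>' (values_upto X N \<omega>)) \<le> D"
    using Suc.IH[of \<Phi>'] \<Phi>' unfolding N_def by blast
  then show ?case
    unfolding \<Phi>'_def using E_indep_last[OF N(1) \<Phi>] by (simp add: N_def values_upto_Suc)
qed

end

section \<open>Block sums and truncated second moments\<close>

lemma sqrt_mult_four_power: "sqrt (c * real ((4::nat) ^ j)) = sqrt c * 2 ^ j"
proof -
  have "real ((4::nat) ^ j) = (2 ^ j)\<^sup>2" by (simp add: power_mult_distrib[symmetric] power2_eq_square)
  then show ?thesis by (simp add: real_sqrt_mult)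
qed

lemma sqrt_mult_block_le:
  assumes "c \<ge> 0" "4 ^ (m - 1) \<le> i"
  shows "sqrt c * 2 ^ (m - 1) \<le> sqrt (c * real i)"
proof -
  have "real ((4::nat) ^ (m - 1)) \<le> real i" using assms(2) by (simp only: of_nat_le_iff)
  then have "sqrt (c * real ((4::nat) ^ (m - 1))) \<le> sqrt (c * real i)"
    using assms(1) by (simp add: mult_left_mono)
  then show ?thesis by (simp only: sqrt_mult_four_power)
qed

lemma min_le_truncated_square:
  fixes u lam B s :: real
  assumes "u > 0" "lam > 0" "B \<ge> 0"
  shows "min B (u * \<bar>s\<bar>) \<le> u\<^sup>2 / (2 * lam) * min (s\<^sup>2) ((B / u)\<^sup>2) + lam / 2"
proof -
  define w where "w = min B (u * \<bar>s\<bar>)"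
  have w: "0 \<le> w" using assms by (simp add: w_def)
  have "u\<^sup>2 * min (s\<^sup>2) ((B / u)\<^sup>2) = min ((u * \<bar>s\<bar>)\<^sup>2) (B\<^sup>2)"
    using assms(1) by (simp add: min_mult_distrib_left power_mult_distrib power_divide)
  also have "\<dots> = w\<^sup>2"
  proof (cases "u * \<bar>s\<bar> \<le> B")
    case True
    then have "(u * \<bar>s\<bar>)\<^sup>2 \<le> B\<^sup>2" using assms(1) by (intro power_mono) auto
    then show ?thesis using True by (simp add: w_def)
  next
    case False
    then have "B\<^sup>2 \<le> (u * \<bar>s\<bar>)\<^sup>2" using assms(3) by (intro power_mono) auto
    then show ?thesis using False by (simp add: w_def)
  qed
  finally have sq: "u\<^sup>2 * min (s\<^sup>2) ((B / u)\<^sup>2) = w\<^sup>2" .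
  have "2 * lam * w \<le> w\<^sup>2 + lam\<^sup>2"
    using sum_squares_ge_zero[of "w - lam" 0] by (simp add: power2_eq_square algebra_simps)
  then have "w \<le> w\<^sup>2 / (2 * lam) + lam / 2"
    using assms(2) by (simp add: field_simps power2_eq_square)
  then show ?thesis using sq by (simp add: w_def)
qed

lemma sum_two_powers_le: "(\<Sum>l\<in>{1..n}. (2::real) ^ l) \<le> 2 * 2 ^ n"
  by (induction n) (auto simp: sum.cl_ivl_Suc)

lemma mult_inverse_power_le:
  assumes "q > 1"
  shows "real n * (1 / q) ^ n \<le> 1 / (q - 1)"
proof -
  have "1 + real n * (q - 1) \<le> (1 + (q - 1)) ^ n" by (rule Bernoulli_inequality) (use assms in simp)
  then have "real n * (q - 1) \<le> q ^ n" by simp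
  then show ?thesis using assms by (simp add: power_one_over field_simps)
qed

locale block_sums = indep_sequence +
  fixes f :: "real \<Rightarrow> real" and Bf Lf K2 c0 Ce q :: real
  assumes X_sq_in_H: "\<And>i. 1 \<le> i \<Longrightarrow> (\<lambda>\<omega>. (X i \<omega>)\<^sup>2) \<in> H"
    and mean_zero: "\<And>i. 1 \<le> i \<Longrightarrow> E (X i) = 0" "\<And>i. 1 \<le> i \<Longrightarrow> E (\<lambda>\<omega>. - X i \<omega>) = 0"
    and K2: "K2 > 0" "\<And>i. 1 \<le> i \<Longrightarrow> E (\<lambda>\<omega>. (X i \<omega>)\<^sup>2) \<le> K2"
    and c0: "c0 > 0" "\<And>i. 1 \<le> i \<Longrightarrow> sqrt (c0 * real i) \<le> Bn E X i"
    and f_bounded: "Bf \<ge> 0" "\<And>x. \<bar>f x\<bar> \<le> Bf"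
    and f_Lipschitz: "Lf > 0" "\<And>x y. \<bar>f x - f y\<bar> \<le> Lf * \<bar>x - y\<bar>"
    and Ce: "Ce \<ge> 0" and q: "q > 1"
    and mean_gap_decay: "\<And>m i. 1 \<le> m \<Longrightarrow> i \<in> {4^(m-1)..<4^m} \<Longrightarrow>
        E (\<lambda>\<omega>. f (Wn E X i \<omega>)) + E (\<lambda>\<omega>. - f (Wn E X i \<omega>)) \<le> Ce * (1 / q) ^ (m - 1)"
begin

definition mu :: "nat \<Rightarrow> real" where
  "mu i = E (\<lambda>\<omega>. f (Wn E X i \<omega>))"

definition block :: "nat \<Rightarrow> nat set" where
  "block l = {4^(l-1)..<4^l}"

definition Z :: "nat \<Rightarrow> 'a \<Rightarrow> real" where
  "Z l \<omega> = (\<Sum>i\<in>block l. (f (Wn E X i \<omega>) - mu i) / real i)"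

definition T :: "nat \<Rightarrow> 'a \<Rightarrow> real" where
  "T n \<omega> = (\<Sum>l\<in>{1..n}. Z l \<omega>)"

definition Z_from :: "nat \<Rightarrow> nat \<Rightarrow> 'a \<Rightarrow> real" where
  "Z_from k m \<omega> = (\<Sum>i\<in>block m. (f ((Sn X i \<omega> - Sn X k \<omega>) / Bn E X i) - mu i) / real i)"

definition shift_err :: "nat \<Rightarrow> nat \<Rightarrow> 'a \<Rightarrow> real" where
  "shift_err k i \<omega> = min (2 * Bf) (Lf / Bn E X i * \<bar>Sn X k \<omega>\<bar>)"

definition R :: real where
  "R = 6 * Bf"

lemma finite_block [simp]: "finite (block l)"
  by (simp add: block_def)

lemma block_lower: "i \<in> block l \<Longrightarrow> 4 ^ (l - 1) \<le> i"
  by (simp add: block_def)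

lemma block_ge1: "i \<in> block l \<Longrightarrow> 1 \<le> i"
  using block_lower[of i l] one_le_power[of "4::nat" "l - 1"] by linarith

lemma card_block: "1 \<le> l \<Longrightarrow> card (block l) = 3 * 4 ^ (l - 1)"
  by (cases l) (simp_all add: block_def)

lemma Bn_pos:
  assumes "1 \<le> i"
  shows "Bn E X i > 0"
proof -
  have "0 < sqrt (c0 * real i)" using c0(1) assms by simp
  then show ?thesis using c0(2)[OF assms] by linarith
qed

lemma Bn_block_lower: "i \<in> block m \<Longrightarrow> sqrt c0 * 2 ^ (m - 1) \<le> Bn E X i"
  using sqrt_mult_block_le[of c0 m i] c0 block_lower block_ge1 by fastforce

lemma f_bLip: "bLip1 f"
  using f_bounded f_Lipschitz unfolding bLip1_def by blast

lemma f_Wn_in_H: "(\<lambda>\<omega>. f (Wn E X i \<omega>)) \<in> H"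
  by (rule closed_comp[OF f_bLip Wn_in_H])

lemma R_nonneg: "R \<ge> 0"
  using f_bounded(1) by (simp add: R_def)

lemma sum_block_le:
  assumes l: "1 \<le> l" and "0 \<le> G" and "\<And>i. i \<in> block l \<Longrightarrow> g i \<le> G"
  shows "(\<Sum>i\<in>block l. g i / real i) \<le> 3 * G"
proof -
  have "(\<Sum>i\<in>block l. g i / real i) \<le> (\<Sum>i\<in>block l. G / 4 ^ (l - 1))"
  proof (rule sum_mono)
    fix i assume i: "i \<in> block l"
    have i4: "(4::real) ^ (l - 1) \<le> real i"
      using block_lower[OF i] by (metis of_nat_le_iff of_nat_numeral of_nat_power)
    have "g i / real i \<le> G / real i"
      using assms(3)[OF i] i4 by (simp add: divide_right_mono)
    also have "\<dots> \<le> G / 4 ^ (l - 1)"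
      by (rule divide_left_mono[OF i4 assms(2)])
        (use i4 in \<open>metis mult_pos_pos less_le_trans zero_less_numeral zero_less_power\<close>)
    finally show "g i / real i \<le> G / 4 ^ (l - 1)" .
  qed
  also have "\<dots> = 3 * G" using card_block[OF l] by simp
  finally show ?thesis .
qed

lemma abs_block_sum_le:
  assumes "1 \<le> l"
  shows "\<bar>\<Sum>i\<in>block l. (f (x i) - mu i) / real i\<bar> \<le> R"
proof -
  have mu: "\<bar>mu i\<bar> \<le> Bf" for i
    unfolding mu_def by (rule E_abs_le[OF f_Wn_in_H f_bounded(2)])
  have "\<bar>\<Sum>i\<in>block l. (f (x i) - mu i) / real i\<bar> \<le> (\<Sum>i\<in>block l. \<bar>f (x i) - mu i\<bar> / real i)"
    using sum_abs[of "\<lambda>i. (f (x i) - mu i) / real i"] by (simp add: abs_div)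
  also have "\<dots> \<le> 3 * (2 * Bf)"
  proof (rule sum_block_le[OF assms])
    show "0 \<le> 2 * Bf" using f_bounded(1) by simp
    show "\<bar>f (x i) - mu i\<bar> \<le> 2 * Bf" for i using f_bounded(2)[of "x i"] mu[of i] by linarith
  qed
  finally show ?thesis unfolding R_def by simp
qed

lemma abs_Z_le: "1 \<le> l \<Longrightarrow> \<bar>Z l \<omega>\<bar> \<le> R"
  unfolding Z_def by (rule abs_block_sum_le)

lemma abs_Z_from_le: "1 \<le> m \<Longrightarrow> \<bar>Z_from k m \<omega>\<bar> \<le> R"
  unfolding Z_from_def by (rule abs_block_sum_le)

lemma Z_in_H: "Z l \<in> H"
  unfolding Z_def
  by (intro closed_sum closed_divide closed_diff f_Wn_in_H closed_const) simp

lemma Z_from_in_H: "Z_from k m \<in> H"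
proof -
  have "(\<lambda>\<omega>. f ((Sn X i \<omega> - Sn X k \<omega>) / Bn E X i)) \<in> H" for i
    by (intro closed_comp[OF f_bLip] closed_divide closed_diff Sn_in_H)
  then show ?thesis
    unfolding Z_from_def by (intro closed_sum closed_divide closed_diff closed_const) simp_all
qed

lemma shift_err_in_H: "shift_err k i \<in> H"
proof -
  define u where "u = Lf / Bn E X i"
  have "Bn E X i \<ge> 0" unfolding Bn_def by (simp add: sum_nonneg)
  then have u: "u \<ge> 0" unfolding u_def using f_Lipschitz(1) by simp
  have "bLip1 (\<lambda>t. min (2 * Bf) (u * \<bar>t\<bar>))"
  proof (rule bLip1I[of _ "2 * Bf" u])
    fix x y :: real
    have "\<bar>u * \<bar>x\<bar> - u * \<bar>y\<bar>\<bar> \<le> u * \<bar>x - y\<bar>"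
      using u by (metis abs_mult abs_of_nonneg abs_triangle_ineq3 mult_left_mono right_diff_distrib)
    then show "\<bar>min (2 * Bf) (u * \<bar>x\<bar>) - min (2 * Bf) (u * \<bar>y\<bar>)\<bar> \<le> u * \<bar>x - y\<bar>"
      by (simp add: min_def abs_if split: if_splits; linarith)
  qed (use u f_bounded(1) in \<open>auto simp: min_def\<close>)
  then show ?thesis unfolding shift_err_def u_def[symmetric] by (rule closed_comp[OF _ Sn_in_H])
qed

lemma abs_f_shift_le:
  assumes "1 \<le> i"
  shows "\<bar>f (Wn E X i \<omega>) - f ((Sn X i \<omega> - Sn X k \<omega>) / Bn E X i)\<bar> \<le> shift_err k i \<omega>"
proof -
  have B: "Bn E X i > 0" by (rule Bn_pos[OF assms])
  have "Wn E X i \<omega> - (Sn X i \<omega> - Sn X k \<omega>) / Bn E X i = Sn X k \<omega> / Bn E X i"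
    unfolding Wn_def using B by (simp add: field_simps)
  then have "\<bar>f (Wn E X i \<omega>) - f ((Sn X i \<omega> - Sn X k \<omega>) / Bn E X i)\<bar> \<le> Lf / Bn E X i * \<bar>Sn X k \<omega>\<bar>"
    using f_Lipschitz(2)[of "Wn E X i \<omega>" "(Sn X i \<omega> - Sn X k \<omega>) / Bn E X i"] B by (simp add: abs_div)
  moreover have "\<bar>f (Wn E X i \<omega>) - f ((Sn X i \<omega> - Sn X k \<omega>) / Bn E X i)\<bar> \<le> 2 * Bf"
    using f_bounded(2)[of "Wn E X i \<omega>"] f_bounded(2)[of "(Sn X i \<omega> - Sn X k \<omega>) / Bn E X i"] by linarith
  ultimately show ?thesis unfolding shift_err_def by simp
qed

lemma E_min_Sn_square_le: "E (\<lambda>\<omega>. min ((Sn X k \<omega>)\<^sup>2) (r\<^sup>2)) \<le> K2 * real k"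
proof (induction k)
  case 0 then show ?case by (simp add: Sn_def)
next
  case (Suc j)
  have X: "X (Suc j) \<in> H" "(\<lambda>\<omega>. (X (Suc j) \<omega>)\<^sup>2) \<in> H" "E (\<lambda>\<omega>. (X (Suc j) \<omega>)\<^sup>2) \<le> K2"
    "\<And>c. E (\<lambda>\<omega>. c * X (Suc j) \<omega>) = 0"
    using X_in_H X_sq_in_H K2 E_scale_mean_zero[OF X_in_H mean_zero] by auto
  have shift: "E (\<lambda>\<omega>. min ((t + X (Suc j) \<omega>)\<^sup>2) (r\<^sup>2)) \<le> min (t\<^sup>2) (r\<^sup>2) + K2" for t
    using E_min_square_shift_le[OF X(1-3)] X(4) K2(1) by simp
  show ?case
  proof (cases "j = 0")
    case True
    then show ?thesis using shift[of 0] by (simp add: Sn_def)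
  next
    case False
    define \<phi> where "\<phi> zs = min ((\<Sum>i<Suc j. zs ! i)\<^sup>2) (r\<^sup>2)" for zs :: "real list"
    have \<phi>: "bLip_len (Suc j) \<phi>"
      unfolding \<phi>_def by (rule bLip_len_comp_partial_sum[OF bLip1_min_square]) simp
    have \<phi>_snoc: "\<phi> (values_upto X j \<omega> @ [y]) = min ((Sn X j \<omega> + y)\<^sup>2) (r\<^sup>2)" for \<omega> y
      unfolding \<phi>_def using sum_snoc[of "values_upto X j \<omega>" j y] sum_values_upto[of j j X \<omega>] by simp
    have Sn_Suc: "Sn X (Suc j) \<omega> = Sn X j \<omega> + X (Suc j) \<omega>" for \<omega>
      by (simp add: Sn_def)
    have "E (\<lambda>\<omega>. min ((Sn X (Suc j) \<omega>)\<^sup>2) (r\<^sup>2)) = E (\<lambda>\<omega>. \<phi> (values_upto X j \<omega> @ [X (Suc j) \<omega>]))"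
      by (simp add: \<phi>_snoc Sn_Suc)
    also have "\<dots> = E (\<lambda>\<omega>. E (\<lambda>\<omega>'. min ((Sn X j \<omega> + X (Suc j) \<omega>')\<^sup>2) (r\<^sup>2)))"
      using E_indep_last[OF _ \<phi>] False by (simp add: \<phi>_snoc)
    also have "\<dots> \<le> E (\<lambda>\<omega>. min ((Sn X j \<omega>)\<^sup>2) (r\<^sup>2)) + K2"
      by (rule E_le_add_const[OF closed_comp[OF bLip1_E_min_square_shift[OF X(1)] Sn_in_H]
            closed_comp[OF bLip1_min_square Sn_in_H]]) (rule shift)
    also have "\<dots> \<le> K2 * real (Suc j)" using Suc.IH by (simp add: algebra_simps)
    finally show ?thesis .
  qed
qed

lemma E_shift_err_le:
  assumes "1 \<le> k" "1 \<le> i"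
  shows "E (shift_err k i) \<le> Lf / Bn E X i * sqrt (K2 * real k)"
proof -
  define u where "u = Lf / Bn E X i"
  have u: "u > 0" unfolding u_def using f_Lipschitz(1) Bn_pos[OF assms(2)] by simp
  define lam where "lam = u * sqrt (K2 * real k)"
  have lam: "lam > 0" unfolding lam_def using u K2(1) assms(1) by simp
  define r where "r = 2 * Bf / u"
  have coeff: "u\<^sup>2 / (2 * lam) \<ge> 0" using lam by simp
  have trunc_H: "(\<lambda>\<omega>. min ((Sn X k \<omega>)\<^sup>2) (r\<^sup>2)) \<in> H"
    by (rule closed_comp[OF bLip1_min_square Sn_in_H])
  have "shift_err k i \<omega> \<le> u\<^sup>2 / (2 * lam) * min ((Sn X k \<omega>)\<^sup>2) (r\<^sup>2) + lam / 2" for \<omega>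
    using min_le_truncated_square[OF u lam, of "2 * Bf" "Sn X k \<omega>"] f_bounded(1)
    unfolding shift_err_def u_def[symmetric] r_def by simp
  then have "E (shift_err k i) \<le> E (\<lambda>\<omega>. u\<^sup>2 / (2 * lam) * min ((Sn X k \<omega>)\<^sup>2) (r\<^sup>2)) + lam / 2"
    by (intro E_le_add_const[OF shift_err_in_H closed_scale[OF trunc_H]])
  also have "\<dots> \<le> u\<^sup>2 / (2 * lam) * (K2 * real k) + lam / 2"
    using E_pos_hom[OF trunc_H coeff] mult_left_mono[OF E_min_Sn_square_le coeff] by simp
  also have "\<dots> = lam"
  proof -
    have "lam\<^sup>2 = u\<^sup>2 * (K2 * real k)" unfolding lam_def using K2(1) by (simp add: power_mult_distrib)
    then show ?thesis using lam by (simp add: field_simps power2_eq_square)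
  qed
  finally show ?thesis unfolding lam_def u_def .
qed

definition A0 :: real where
  "A0 = Lf * sqrt K2 / sqrt c0"

lemma A0_nonneg: "A0 \<ge> 0"
  unfolding A0_def using f_Lipschitz(1) K2(1) c0(1) by simp

lemma E_shift_err_block_le:
  assumes "1 \<le> l" "i \<in> block m"
  shows "E (shift_err (4 ^ l) i) \<le> A0 * 2 ^ l / 2 ^ (m - 1)"
proof -
  have i: "1 \<le> i" by (rule block_ge1[OF assms(2)])
  have pos: "0 < sqrt c0 * 2 ^ (m - 1)" using c0(1) by simp
  have "E (shift_err (4 ^ l) i) \<le> Lf / Bn E X i * sqrt (K2 * real ((4::nat) ^ l))"
    by (rule E_shift_err_le) (use i in simp_all)
  also have "\<dots> = Lf / Bn E X i * (sqrt K2 * 2 ^ l)" by (simp only: sqrt_mult_four_power)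
  also have "\<dots> \<le> Lf / (sqrt c0 * 2 ^ (m - 1)) * (sqrt K2 * 2 ^ l)"
    using Bn_block_lower[OF assms(2)] f_Lipschitz(1) pos K2(1)
    by (intro mult_right_mono divide_left_mono) auto
  also have "\<dots> = A0 * 2 ^ l / 2 ^ (m - 1)" unfolding A0_def by (simp add: field_simps)
  finally show ?thesis .
qed

end

section \<open>Correlations between blocks\<close>

context block_sums
begin

lemma bLip1_f_affine: "bLip1 (\<lambda>t. (f (t / b) - c) / r)"
proof (rule bLip1I[of _ "(Bf + \<bar>c\<bar>) / \<bar>r\<bar>" "Lf / (\<bar>b\<bar> * \<bar>r\<bar>)"])
  fix x
  have "\<bar>f (x / b) - c\<bar> \<le> Bf + \<bar>c\<bar>" using f_bounded(2)[of "x / b"] by linarith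
  then show "\<bar>(f (x / b) - c) / r\<bar> \<le> (Bf + \<bar>c\<bar>) / \<bar>r\<bar>" by (simp add: abs_div divide_right_mono)
next
  fix x y
  have "\<bar>f (x / b) - f (y / b)\<bar> \<le> Lf * \<bar>x / b - y / b\<bar>" by (rule f_Lipschitz(2))
  also have "\<dots> = Lf * \<bar>x - y\<bar> / \<bar>b\<bar>" by (simp add: diff_divide_distrib[symmetric] abs_div)
  finally have "\<bar>f (x / b) - f (y / b)\<bar> / \<bar>r\<bar> \<le> Lf * \<bar>x - y\<bar> / \<bar>b\<bar> / \<bar>r\<bar>"
    by (rule divide_right_mono) simp
  moreover have "(f (x / b) - c) / r - (f (y / b) - c) / r = (f (x / b) - f (y / b)) / r"
    by (simp add: diff_divide_distrib)
  ultimately show "\<bar>(f (x / b) - c) / r - (f (y / b) - c) / r\<bar> \<le> Lf / (\<bar>b\<bar> * \<bar>r\<bar>) * \<bar>x - y\<bar>"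
    by (simp add: abs_div)
qed

definition Z_fun :: "nat \<Rightarrow> real list \<Rightarrow> real" where
  "Z_fun l zs = (\<Sum>i\<in>block l. (f ((\<Sum>j<i. zs ! j) / Bn E X i) - mu i) / real i)"

definition Z_from_fun :: "nat \<Rightarrow> nat \<Rightarrow> real list \<Rightarrow> real" where
  "Z_from_fun k m zs = (\<Sum>i\<in>block m. (f ((\<Sum>j\<in>{k..<i}. zs ! j) / Bn E X i) - mu i) / real i)"

lemma bLip_len_Z_fun:
  assumes "4 ^ l \<le> N"
  shows "bLip_len N (Z_fun l)"
  unfolding Z_fun_def
proof (rule bLip_len_sum, simp)
  fix i assume "i \<in> block l"
  then have "{..<i} \<subseteq> {..<N}" using assms unfolding block_def by auto
  then show "bLip_len N (\<lambda>zs. (f ((\<Sum>j<i. zs ! j) / Bn E X i) - mu i) / real i)"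
    by (rule bLip_len_comp_partial_sum[OF bLip1_f_affine])
qed

lemma bLip_len_Z_from_fun:
  assumes "4 ^ m \<le> N"
  shows "bLip_len N (Z_from_fun k m)"
  unfolding Z_from_fun_def
proof (rule bLip_len_sum, simp)
  fix i assume "i \<in> block m"
  then have "{k..<i} \<subseteq> {..<N}" using assms unfolding block_def by auto
  then show "bLip_len N (\<lambda>zs. (f ((\<Sum>j\<in>{k..<i}. zs ! j) / Bn E X i) - mu i) / real i)"
    by (rule bLip_len_comp_partial_sum[OF bLip1_f_affine])
qed

lemma Z_fun_values_upto:
  assumes "4 ^ l \<le> N"
  shows "Z_fun l (values_upto X N \<omega>) = Z l \<omega>"
  unfolding Z_fun_def Z_def
proof (rule sum.cong[OF refl])
  fix i assume "i \<in> block l"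
  then have "i \<le> N" using assms unfolding block_def by auto
  then show "(f ((\<Sum>j<i. values_upto X N \<omega> ! j) / Bn E X i) - mu i) / real i =
      (f (Wn E X i \<omega>) - mu i) / real i"
    by (simp add: sum_values_upto Wn_def)
qed

lemma Z_from_fun_values_upto:
  assumes "k \<le> 4 ^ (m - 1)" "4 ^ m \<le> N"
  shows "Z_from_fun k m (values_upto X N \<omega>) = Z_from k m \<omega>"
  unfolding Z_from_fun_def Z_from_def
proof (rule sum.cong[OF refl])
  fix i assume "i \<in> block m"
  then have "k \<le> i" "i \<le> N" using assms unfolding block_def by auto
  then show "(f ((\<Sum>j\<in>{k..<i}. values_upto X N \<omega> ! j) / Bn E X i) - mu i) / real i =
      (f ((Sn X i \<omega> - Sn X k \<omega>) / Bn E X i) - mu i) / real i"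
    by (simp add: sum_values_upto_from)
qed

lemma Z_fun_append:
  assumes "length c = k" "4 ^ l \<le> k"
  shows "Z_fun l (c @ rest) = Z_fun l c"
  unfolding Z_fun_def
proof (rule sum.cong[OF refl])
  fix i assume "i \<in> block l"
  then have "i \<le> k" using assms unfolding block_def by auto
  then have "(\<Sum>j<i. (c @ rest) ! j) = (\<Sum>j<i. c ! j)"
    using assms(1) by (intro sum.cong) (auto simp: nth_append)
  then show "(f ((\<Sum>j<i. (c @ rest) ! j) / Bn E X i) - mu i) / real i =
      (f ((\<Sum>j<i. c ! j) / Bn E X i) - mu i) / real i" by simp
qed

lemma Z_from_fun_replace_prefix:
  assumes "length c = k" "k \<le> length v"
  shows "Z_from_fun k m (c @ drop k v) = Z_from_fun k m v"
  unfolding Z_from_fun_def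
proof (rule sum.cong[OF refl])
  fix i
  have "(\<Sum>j\<in>{k..<i}. (c @ drop k v) ! j) = (\<Sum>j\<in>{k..<i}. v ! j)"
    using assms by (intro sum.cong) (auto simp: nth_append)
  then show "(f ((\<Sum>j\<in>{k..<i}. (c @ drop k v) ! j) / Bn E X i) - mu i) / real i =
      (f ((\<Sum>j\<in>{k..<i}. v ! j) / Bn E X i) - mu i) / real i" by simp
qed

lemma abs_Z_fun_le: "1 \<le> l \<Longrightarrow> \<bar>Z_fun l c\<bar> \<le> R"
  unfolding Z_fun_def by (rule abs_block_sum_le)

text \<open>This is where independence enters: \<open>Z l\<close> is a function of the first \<open>4^l\<close> variables,
  \<open>Z_from (4^l) m\<close> of the later ones.\<close>

lemma E_Z_mult_Z_from_le:
  assumes l: "1 \<le> l" "l < m"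
  shows "E (\<lambda>\<omega>. Z l \<omega> * Z_from (4^l) m \<omega>) \<le>
      R * (max (E (Z_from (4^l) m)) 0 + max (E (\<lambda>\<omega>. - Z_from (4^l) m \<omega>)) 0)"
    (is "_ \<le> ?D")
proof -
  define k :: nat where "k = 4 ^ l"
  define N :: nat where "N = 4 ^ m"
  have k: "1 \<le> k" "k \<le> 4 ^ (m - 1)" "k \<le> N"
    unfolding k_def N_def using l by (simp_all add: power_increasing)
  have lN: "4 ^ l \<le> N" using k(3) by (simp add: k_def)
  have N: "values_upto X (k + (N - k)) \<omega> = values_upto X N \<omega>" for \<omega>
    using k by simp
  define \<Phi> where "\<Phi> zs = Z_fun l zs * Z_from_fun k m zs" for zs
  have \<Phi>: "bLip_len (k + (N - k)) \<Phi>"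
    unfolding \<Phi>_def using bLip_len_mult[OF bLip_len_Z_fun[OF lN] bLip_len_Z_from_fun[of m N k]] k(3)
    by (simp add: N_def)
  have "E (\<lambda>\<omega>. \<Phi> (values_upto X (k + (N - k)) \<omega>)) \<le> ?D"
  proof (rule E_le_by_freezing_prefix[OF k(1) \<Phi>])
    fix c :: "real list" assume c: "length c = k"
    have "\<Phi> (c @ drop k (values_upto X (k + (N - k)) \<omega>)) = Z_fun l c * Z_from (4^l) m \<omega>" for \<omega>
    proof -
      have "Z_fun l (c @ drop k (values_upto X N \<omega>)) = Z_fun l c"
        by (rule Z_fun_append[OF c]) (simp add: k_def)
      moreover have "Z_from_fun k m (c @ drop k (values_upto X N \<omega>)) = Z_from k m \<omega>"
        using Z_from_fun_replace_prefix[OF c] Z_from_fun_values_upto[OF k(2)] k(3)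
        by (simp add: N_def)
      ultimately show ?thesis unfolding \<Phi>_def N by (simp add: k_def)
    qed
    then show "E (\<lambda>\<omega>. \<Phi> (c @ drop k (values_upto X (k + (N - k)) \<omega>))) \<le> ?D"
      using E_mult_le_mean_parts[OF abs_Z_fun_le[OF l(1)] Z_from_in_H] by simp
  qed
  moreover have "\<Phi> (values_upto X (k + (N - k)) \<omega>) = Z l \<omega> * Z_from (4^l) m \<omega>" for \<omega>
    unfolding \<Phi>_def N using Z_fun_values_upto[OF lN] Z_from_fun_values_upto[OF k(2)]
    by (simp add: k_def N_def)
  ultimately show ?thesis by simp
qed

lemma E_signed_Z_from_le:
  assumes "s = 1 \<or> s = -1"
  shows "E (\<lambda>\<omega>. s * Z_from k m \<omega>) \<le>
    (\<Sum>i\<in>block m. (E (\<lambda>\<omega>. s * f (Wn E X i \<omega>)) - s * mu i + E (shift_err k i)) / real i)"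
proof -
  define G where "G i \<omega> = s * f (Wn E X i \<omega>) + - s * mu i + shift_err k i \<omega>" for i \<omega>
  have G_H: "G i \<in> H" for i
    unfolding G_def by (intro closed_add closed_add_const closed_scale f_Wn_in_H shift_err_in_H)
  have "E (\<lambda>\<omega>. s * Z_from k m \<omega>) \<le> E (\<lambda>\<omega>. \<Sum>i\<in>block m. G i \<omega> / real i)"
  proof (rule E_mono[OF closed_scale[OF Z_from_in_H] closed_sum[OF finite_block closed_divide[OF G_H]]])
    fix \<omega>
    show "s * Z_from k m \<omega> \<le> (\<Sum>i\<in>block m. G i \<omega> / real i)"
      unfolding Z_from_def sum_distrib_left
    proof (rule sum_mono)
      fix i assume i: "i \<in> block m"
      have "s * (f ((Sn X i \<omega> - Sn X k \<omega>) / Bn E X i) - mu i) \<le> G i \<omega>"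
        using abs_f_shift_le[OF block_ge1[OF i], of \<omega> k] assms unfolding G_def
        by (elim disjE) (simp_all add: abs_le_iff)
      then show "s * ((f ((Sn X i \<omega> - Sn X k \<omega>) / Bn E X i) - mu i) / real i) \<le> G i \<omega> / real i"
        by (simp add: divide_right_mono)
    qed
  qed
  also have "\<dots> \<le> (\<Sum>i\<in>block m. E (\<lambda>\<omega>. G i \<omega> / real i))"
    by (rule E_sum_le[OF finite_block closed_divide[OF G_H]])
  also have "\<dots> \<le> (\<Sum>i\<in>block m. (E (\<lambda>\<omega>. s * f (Wn E X i \<omega>)) - s * mu i + E (shift_err k i)) / real i)"
  proof (rule sum_mono)
    fix i assume i: "i \<in> block m"
    have "0 < real i" using block_ge1[OF i] by simp
    then have "E (\<lambda>\<omega>. G i \<omega> / real i) = E (G i) / real i" by (rule E_divide[OF G_H])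
    also have "\<dots> \<le> (E (\<lambda>\<omega>. s * f (Wn E X i \<omega>) + - s * mu i) + E (shift_err k i)) / real i"
      unfolding G_def
      by (intro divide_right_mono E_subadd closed_add_const closed_scale f_Wn_in_H shift_err_in_H) simp
    also have "\<dots> = (E (\<lambda>\<omega>. s * f (Wn E X i \<omega>)) - s * mu i + E (shift_err k i)) / real i"
      using E_add_const[OF closed_scale[OF f_Wn_in_H], of s i "- s * mu i"] by simp
    finally show "E (\<lambda>\<omega>. G i \<omega> / real i) \<le> \<dots>" .
  qed
  finally show ?thesis .
qed

lemma E_Z_from_le: "E (Z_from k m) \<le> (\<Sum>i\<in>block m. E (shift_err k i) / real i)"
  using E_signed_Z_from_le[of 1 k m] by (simp add: mu_def)

lemma E_uminus_Z_from_le: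
  assumes "1 \<le> m"
  shows "E (\<lambda>\<omega>. - Z_from k m \<omega>) \<le> (\<Sum>i\<in>block m. (Ce * (1 / q) ^ (m - 1) + E (shift_err k i)) / real i)"
proof -
  have "E (\<lambda>\<omega>. - f (Wn E X i \<omega>)) + mu i \<le> Ce * (1 / q) ^ (m - 1)" if "i \<in> block m" for i
    using mean_gap_decay[OF assms] that unfolding mu_def block_def by (simp add: add.commute)
  then have "(\<Sum>i\<in>block m. (E (\<lambda>\<omega>. - f (Wn E X i \<omega>)) + mu i + E (shift_err k i)) / real i) \<le>
      (\<Sum>i\<in>block m. (Ce * (1 / q) ^ (m - 1) + E (shift_err k i)) / real i)"
    by (intro sum_mono divide_right_mono) auto
  then show ?thesis using E_signed_Z_from_le[of "-1" k m] by simp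
qed

lemma abs_Z_diff_Z_from_le:
  "\<bar>Z m \<omega> - Z_from k m \<omega>\<bar> \<le> (\<Sum>i\<in>block m. shift_err k i \<omega> / real i)"
proof -
  have "Z m \<omega> - Z_from k m \<omega> =
      (\<Sum>i\<in>block m. (f (Wn E X i \<omega>) - f ((Sn X i \<omega> - Sn X k \<omega>) / Bn E X i)) / real i)"
    unfolding Z_def Z_from_def sum_subtractf[symmetric] by (rule sum.cong) (auto simp: diff_divide_distrib)
  then have "\<bar>Z m \<omega> - Z_from k m \<omega>\<bar> \<le>
      (\<Sum>i\<in>block m. \<bar>f (Wn E X i \<omega>) - f ((Sn X i \<omega> - Sn X k \<omega>) / Bn E X i)\<bar> / real i)"
    using sum_abs[of "\<lambda>i. (f (Wn E X i \<omega>) - f ((Sn X i \<omega> - Sn X k \<omega>) / Bn E X i)) / real i"]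
    by (simp add: abs_div)
  also have "\<dots> \<le> (\<Sum>i\<in>block m. shift_err k i \<omega> / real i)"
    by (intro sum_mono divide_right_mono abs_f_shift_le[OF block_ge1]) simp_all
  finally show ?thesis .
qed

lemma E_sum_shift_err_le:
  "E (\<lambda>\<omega>. \<Sum>i\<in>block m. shift_err k i \<omega> / real i) \<le> (\<Sum>i\<in>block m. E (shift_err k i) / real i)"
proof -
  have "E (\<lambda>\<omega>. \<Sum>i\<in>block m. shift_err k i \<omega> / real i) \<le>
      (\<Sum>i\<in>block m. E (\<lambda>\<omega>. shift_err k i \<omega> / real i))"
    by (intro E_sum_le closed_divide shift_err_in_H) simp
  also have "\<dots> = (\<Sum>i\<in>block m. E (shift_err k i) / real i)"
  proof (rule sum.cong[OF refl])
    fix i assume i: "i \<in> block m"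
    have "0 < real i" using block_ge1[OF i] by simp
    then show "E (\<lambda>\<omega>. shift_err k i \<omega> / real i) = E (shift_err k i) / real i"
      by (rule E_divide[OF shift_err_in_H])
  qed
  finally show ?thesis .
qed

lemma E_Z_mult_Z_le_Z_from:
  assumes "1 \<le> l" "1 \<le> m"
  shows "E (\<lambda>\<omega>. Z l \<omega> * Z m \<omega>) \<le>
    E (\<lambda>\<omega>. Z l \<omega> * Z_from k m \<omega>) + R * (\<Sum>i\<in>block m. E (shift_err k i) / real i)"
proof -
  define F where "F \<omega> = (\<Sum>i\<in>block m. shift_err k i \<omega> / real i)" for \<omega>
  have F_H: "F \<in> H" unfolding F_def by (intro closed_sum closed_divide shift_err_in_H) simp
  have ZZ_from_H: "(\<lambda>\<omega>. Z l \<omega> * Z_from k m \<omega>) \<in> H"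
    using abs_Z_le[OF assms(1)] abs_Z_from_le[OF assms(2)]
    by (intro closed_mult_bounded[OF Z_in_H Z_from_in_H]) auto
  have ZZ_H: "(\<lambda>\<omega>. Z l \<omega> * Z m \<omega>) \<in> H"
    using abs_Z_le[OF assms(1)] abs_Z_le[OF assms(2)]
    by (intro closed_mult_bounded[OF Z_in_H Z_in_H]) auto
  have "Z l \<omega> * (Z m \<omega> - Z_from k m \<omega>) \<le> \<bar>Z l \<omega>\<bar> * \<bar>Z m \<omega> - Z_from k m \<omega>\<bar>" for \<omega>
    by (metis abs_ge_self abs_mult)
  also have "\<bar>Z l \<omega>\<bar> * \<bar>Z m \<omega> - Z_from k m \<omega>\<bar> \<le> R * F \<omega>" for \<omega>
    unfolding F_def using abs_Z_le[OF assms(1)] abs_Z_diff_Z_from_le R_nonneg by (intro mult_mono) auto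
  finally have "E (\<lambda>\<omega>. Z l \<omega> * Z m \<omega>) \<le> E (\<lambda>\<omega>. Z l \<omega> * Z_from k m \<omega> + R * F \<omega>)"
    by (intro E_mono[OF ZZ_H closed_add[OF ZZ_from_H closed_scale[OF F_H]]]) (simp add: algebra_simps)
  also have "\<dots> \<le> E (\<lambda>\<omega>. Z l \<omega> * Z_from k m \<omega>) + R * E F"
    using E_subadd[OF ZZ_from_H closed_scale[OF F_H, of R]] E_pos_hom[OF F_H R_nonneg] by simp
  also have "\<dots> \<le> E (\<lambda>\<omega>. Z l \<omega> * Z_from k m \<omega>) + R * (\<Sum>i\<in>block m. E (shift_err k i) / real i)"
    using E_sum_shift_err_le[where m = m and k = k] R_nonneg unfolding F_def by (simp add: mult_left_mono)
  finally show ?thesis .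
qed

end

section \<open>Second moment of \<open>T\<^sub>n\<close>\<close>

context block_sums
begin

lemma E_Z_mult_Z_le:
  assumes l: "1 \<le> l" "l < m"
  shows "E (\<lambda>\<omega>. Z l \<omega> * Z m \<omega>) \<le> 9 * R * (A0 * 2 ^ l / 2 ^ (m - 1)) + 3 * R * (Ce * (1 / q) ^ (m - 1))"
proof -
  have m: "1 \<le> m" using l by simp
  define G where "G = A0 * 2 ^ l / 2 ^ (m - 1)"
  define eps where "eps = Ce * (1 / q) ^ (m - 1)"
  have G: "G \<ge> 0" unfolding G_def using A0_nonneg by simp
  have eps: "eps \<ge> 0" unfolding eps_def using Ce q by simp
  define k :: nat where "k = 4 ^ l"
  have shift: "E (shift_err k i) \<le> G" if "i \<in> block m" for i
    unfolding G_def k_def by (rule E_shift_err_block_le[OF l(1) that])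
  have err: "(\<Sum>i\<in>block m. E (shift_err k i) / real i) \<le> 3 * G"
    by (rule sum_block_le[OF m G shift])
  have up: "max (E (Z_from k m)) 0 \<le> 3 * G"
    using E_Z_from_le[of k m] err G by simp
  have "(\<Sum>i\<in>block m. (eps + E (shift_err k i)) / real i) \<le> 3 * (eps + G)"
    using eps G shift by (intro sum_block_le[OF m]) auto
  then have lo: "max (E (\<lambda>\<omega>. - Z_from k m \<omega>)) 0 \<le> 3 * (eps + G)"
    using E_uminus_Z_from_le[OF m, of k] G eps unfolding eps_def by simp
  have "E (\<lambda>\<omega>. Z l \<omega> * Z m \<omega>) \<le>
      E (\<lambda>\<omega>. Z l \<omega> * Z_from k m \<omega>) + R * (\<Sum>i\<in>block m. E (shift_err k i) / real i)"
    by (rule E_Z_mult_Z_le_Z_from[OF l(1) m])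
  also have "\<dots> \<le> R * (max (E (Z_from k m)) 0 + max (E (\<lambda>\<omega>. - Z_from k m \<omega>)) 0) + R * (3 * G)"
    using E_Z_mult_Z_from_le[OF l] err R_nonneg unfolding k_def by (intro add_mono mult_left_mono) auto
  also have "\<dots> \<le> R * (3 * G + 3 * (eps + G)) + R * (3 * G)"
    using up lo R_nonneg by (intro add_mono mult_left_mono) auto
  also have "\<dots> = 9 * R * G + 3 * R * eps" by (simp add: algebra_simps)
  finally show ?thesis unfolding G_def eps_def .
qed

lemma sum_E_Z_mult_Z_le:
  "(\<Sum>l\<in>{1..n}. E (\<lambda>\<omega>. Z l \<omega> * Z (Suc n) \<omega>)) \<le> 18 * R * A0 + 3 * R * Ce / (q - 1)"
proof -
  have "(\<Sum>l\<in>{1..n}. E (\<lambda>\<omega>. Z l \<omega> * Z (Suc n) \<omega>)) \<le>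
      (\<Sum>l\<in>{1..n}. 9 * R * A0 / 2 ^ n * 2 ^ l + 3 * R * Ce * (1 / q) ^ n)"
  proof (rule sum_mono)
    fix l assume "l \<in> {1..n}"
    then have "1 \<le> l" "l < Suc n" by auto
    from E_Z_mult_Z_le[OF this]
    show "E (\<lambda>\<omega>. Z l \<omega> * Z (Suc n) \<omega>) \<le> 9 * R * A0 / 2 ^ n * 2 ^ l + 3 * R * Ce * (1 / q) ^ n"
      by (simp add: field_simps)
  qed
  also have "\<dots> = 9 * R * A0 / 2 ^ n * (\<Sum>l\<in>{1..n}. 2 ^ l) + 3 * R * Ce * (real n * (1 / q) ^ n)"
    by (simp add: sum.distrib sum_distrib_left)
  also have "\<dots> \<le> 9 * R * A0 / 2 ^ n * (2 * 2 ^ n) + 3 * R * Ce * (1 / (q - 1))"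
    using R_nonneg A0_nonneg Ce sum_two_powers_le[of n] mult_inverse_power_le[OF q, of n]
    by (intro add_mono mult_left_mono) auto
  also have "\<dots> = 18 * R * A0 + 3 * R * Ce / (q - 1)" by simp
  finally show ?thesis .
qed

lemma T_Suc: "T (Suc n) \<omega> = T n \<omega> + Z (Suc n) \<omega>"
  by (simp add: T_def)

lemma T_sq_in_H: "(\<lambda>\<omega>. (T n \<omega>)\<^sup>2) \<in> H"
proof -
  have T_H: "T n \<in> H" unfolding T_def by (intro closed_sum Z_in_H) simp
  have "\<bar>T n \<omega>\<bar> \<le> real n * R" for \<omega>
  proof -
    have "\<bar>T n \<omega>\<bar> \<le> (\<Sum>l\<in>{1..n}. \<bar>Z l \<omega>\<bar>)" unfolding T_def by (rule sum_abs)
    also have "\<dots> \<le> (\<Sum>l\<in>{1..n}. R)" by (rule sum_mono) (simp add: abs_Z_le)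
    finally show ?thesis by simp
  qed
  then show ?thesis
    using closed_mult_bounded[OF T_H T_H, of "real n * R"] by (simp add: power2_eq_square)
qed

lemma E_T_sq_Suc_le:
  "E (\<lambda>\<omega>. (T (Suc n) \<omega>)\<^sup>2) \<le> E (\<lambda>\<omega>. (T n \<omega>)\<^sup>2) + (R\<^sup>2 + 2 * (18 * R * A0 + 3 * R * Ce / (q - 1)))"
proof -
  define Y where "Y = Z (Suc n)"
  have Y: "Y \<in> H" "\<And>\<omega>. \<bar>Y \<omega>\<bar> \<le> R" unfolding Y_def by (simp_all add: Z_in_H abs_Z_le)
  have Y_sq: "(\<lambda>\<omega>. (Y \<omega>)\<^sup>2) \<in> H"
    using closed_mult_bounded[OF Y(1) Y(1) Y(2) Y(2)] by (simp add: power2_eq_square)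
  have ZY: "(\<lambda>\<omega>. Z l \<omega> * Y \<omega>) \<in> H" if "l \<in> {1..n}" for l
    using that by (intro closed_mult_bounded[OF Z_in_H Y(1) _ Y(2)]) (simp add: abs_Z_le)
  have cross_H: "(\<lambda>\<omega>. \<Sum>l\<in>{1..n}. 2 * (Z l \<omega> * Y \<omega>)) \<in> H"
    by (intro closed_sum closed_scale ZY) simp_all
  have "(T (Suc n) \<omega>)\<^sup>2 = (T n \<omega>)\<^sup>2 + ((Y \<omega>)\<^sup>2 + (\<Sum>l\<in>{1..n}. 2 * (Z l \<omega> * Y \<omega>)))" for \<omega>
    unfolding T_Suc Y_def[symmetric]
    by (simp add: T_def power2_eq_square sum_distrib_left sum_distrib_right algebra_simps)
  then have "E (\<lambda>\<omega>. (T (Suc n) \<omega>)\<^sup>2) =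
      E (\<lambda>\<omega>. (T n \<omega>)\<^sup>2 + ((Y \<omega>)\<^sup>2 + (\<Sum>l\<in>{1..n}. 2 * (Z l \<omega> * Y \<omega>))))"
    by simp
  also have "\<dots> \<le>
      E (\<lambda>\<omega>. (T n \<omega>)\<^sup>2) + (E (\<lambda>\<omega>. (Y \<omega>)\<^sup>2) + E (\<lambda>\<omega>. \<Sum>l\<in>{1..n}. 2 * (Z l \<omega> * Y \<omega>)))"
    using E_subadd[OF T_sq_in_H[of n] closed_add[OF Y_sq cross_H]] E_subadd[OF Y_sq cross_H] by linarith
  also have "E (\<lambda>\<omega>. (Y \<omega>)\<^sup>2) \<le> R\<^sup>2"
    by (intro E_le_const[OF Y_sq]) (use Y(2) R_nonneg in \<open>metis abs_le_square_iff abs_of_nonneg\<close>)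
  also have "E (\<lambda>\<omega>. \<Sum>l\<in>{1..n}. 2 * (Z l \<omega> * Y \<omega>)) \<le> 2 * (\<Sum>l\<in>{1..n}. E (\<lambda>\<omega>. Z l \<omega> * Y \<omega>))"
    using E_sum_le[of "{1..n}" "\<lambda>l \<omega>. 2 * (Z l \<omega> * Y \<omega>)"] ZY
    by (simp add: closed_scale E_pos_hom sum_distrib_left)
  also have "\<dots> \<le> 2 * (18 * R * A0 + 3 * R * Ce / (q - 1))"
    using sum_E_Z_mult_Z_le[of n] unfolding Y_def by simp
  finally show ?thesis by simp
qed

lemma E_T_sq_le_linear: "\<exists>M6>0. \<forall>n\<ge>1. E (\<lambda>\<omega>. (T n \<omega>)\<^sup>2) \<le> M6 * real n"
proof -
  define C where "C = R\<^sup>2 + 2 * (18 * R * A0 + 3 * R * Ce / (q - 1))"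
  have "C \<ge> 0" unfolding C_def using R_nonneg A0_nonneg Ce q by simp
  have E_T_sq: "E (\<lambda>\<omega>. (T n \<omega>)\<^sup>2) \<le> C * real n" for n
  proof (induction n)
    case 0 then show ?case by (simp add: T_def)
  next
    case (Suc n)
    then show ?case using E_T_sq_Suc_le[of n, folded C_def] by (simp add: algebra_simps)
  qed
  show ?thesis
  proof (intro exI[of _ "C + 1"] conjI allI impI)
    show "C + 1 > 0" using \<open>C \<ge> 0\<close> by simp
    show "E (\<lambda>\<omega>. (T n \<omega>)\<^sup>2) \<le> (C + 1) * real n" for n
      using E_T_sq[of n] by (simp add: algebra_simps)
  qed
qed

end

section \<open>Constants from the standing assumptions and from Song's bound\<close>

lemma standing_seq_sig_bounds:
  assumes space: "sublinear_space M H E" and seq: "standing_seq H E \<beta> \<alpha> X" and beta: "\<beta> \<ge> 1"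
  obtains c K where "c > 0" "K > 0" "\<And>i. 1 \<le> i \<Longrightarrow> E (\<lambda>\<omega>. (X i \<omega>)\<^sup>2) \<le> K"
    "\<And>i. 1 \<le> i \<Longrightarrow> sqrt c \<le> sig E X i" "\<And>i. 1 \<le> i \<Longrightarrow> sig E X i \<le> sqrt K"
proof -
  interpret sublinear_expectation M H E by (rule sublinear_expectation.intro[OF space])
  have X_sq: "\<And>i. 1 \<le> i \<Longrightarrow> (\<lambda>\<omega>. (X i \<omega>)\<^sup>2) \<in> H"
    and ratio: "\<And>i. 1 \<le> i \<Longrightarrow> sig_up E X i / sig_lo E X i = \<beta>"
    using seq unfolding standing_seq_def by blast+
  obtain c where c: "c > 0" "\<And>i. 1 \<le> i \<Longrightarrow> c \<le> (sig_lo E X i)\<^sup>2"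
    using seq unfolding standing_seq_def by blast
  obtain K0 where K0: "\<And>i. 1 \<le> i \<Longrightarrow> (sig_up E X i)\<^sup>2 \<le> K0"
    using seq unfolding standing_seq_def by blast
  define K where "K = max K0 1"
  have E_sq: "E (\<lambda>\<omega>. (X i \<omega>)\<^sup>2) \<le> K" and up: "sig_up E X i \<le> sqrt K" if i: "1 \<le> i" for i
  proof -
    have "E (\<lambda>\<omega>. (X i \<omega>)\<^sup>2) \<ge> 0" by (rule E_ge_const[OF X_sq[OF i]]) simp
    then have "(sig_up E X i)\<^sup>2 = E (\<lambda>\<omega>. (X i \<omega>)\<^sup>2)" unfolding sig_up_def by simp
    then show "E (\<lambda>\<omega>. (X i \<omega>)\<^sup>2) \<le> K" using K0[OF i] unfolding K_def by linarith
    then show "sig_up E X i \<le> sqrt K" unfolding sig_up_def by simp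
  qed
  have lo: "sqrt c \<le> sig_lo E X i" if i: "1 \<le> i" for i
  proof -
    have "E (\<lambda>\<omega>. - (X i \<omega>)\<^sup>2) \<le> 0" by (rule E_le_const[OF closed_uminus[OF X_sq[OF i]]]) simp
    then have "sig_lo E X i \<ge> 0" unfolding sig_lo_def by simp
    moreover have "sqrt c \<le> sqrt ((sig_lo E X i)\<^sup>2)" using c(2)[OF i] by (rule real_sqrt_le_mono)
    ultimately show ?thesis by simp
  qed
  have lo_up: "sig_lo E X i \<le> sig_up E X i" if i: "1 \<le> i" for i
  proof -
    have "0 < sqrt c" using c(1) by simp
    then have pos: "sig_lo E X i > 0" using lo[OF i] by linarith
    then have "sig_up E X i = \<beta> * sig_lo E X i" using ratio[OF i] by (simp add: field_simps)
    then show ?thesis using beta pos by (simp add: mult_le_cancel_right1)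
  qed
  show ?thesis
  proof (rule that[OF c(1) _ E_sq])
    show "K > 0" by (simp add: K_def)
    show "sqrt c \<le> sig E X i" if "1 \<le> i" for i
      using lo[OF that] lo_up[OF that] unfolding sig_def by simp
    show "sig E X i \<le> sqrt K" if "1 \<le> i" for i
      using lo_up[OF that] up[OF that] unfolding sig_def by simp
  qed
qed

lemma Bn_ge_sqrt:
  assumes "0 \<le> c" "\<And>j. 1 \<le> j \<Longrightarrow> sqrt c \<le> sig E X j"
  shows "sqrt (c * real i) \<le> Bn E X i"
proof -
  have "c \<le> (sig E X j)\<^sup>2" if "j \<in> {1..i}" for j
    using power_mono[OF assms(2), of j 2] that assms(1) by simp
  then have "(\<Sum>j=1..i. c) \<le> (\<Sum>j=1..i. (sig E X j)\<^sup>2)" by (rule sum_mono)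
  then show ?thesis unfolding Bn_def by (simp add: mult.commute)
qed

lemma power_powr:
  fixes x :: real
  assumes "0 < x"
  shows "(x ^ n) powr a = (x powr a) ^ n"
  using assms by (simp add: powr_realpow[symmetric] powr_powr powr_power mult.commute)

lemma song_term_le:
  fixes a s s0 s1 B Km \<alpha> :: real
  assumes s0: "0 < s0" "s0 \<le> s" "s \<le> s1" and a: "a \<le> Km" and B: "s0 * 2 ^ n \<le> B" and \<alpha>: "0 < \<alpha>"
  shows "a / s powr (2 + \<alpha>) * (s / B) powr \<alpha> \<le>
    max Km 0 / s0 powr (2 + \<alpha>) * (s1 / s0) powr \<alpha> * (1 / 2 powr \<alpha>) ^ n"
proof -
  have B_pos: "0 < B" using s0(1) B by (smt (verit) zero_less_power mult_pos_pos)
  have "a / s powr (2 + \<alpha>) \<le> max Km 0 / s powr (2 + \<alpha>)"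
    using a by (intro divide_right_mono) auto
  also have "\<dots> \<le> max Km 0 / s0 powr (2 + \<alpha>)"
    using s0 \<alpha> by (intro divide_left_mono powr_mono2 mult_pos_pos) auto
  finally have first: "a / s powr (2 + \<alpha>) \<le> max Km 0 / s0 powr (2 + \<alpha>)" .
  have "s / B \<le> s1 / (s0 * 2 ^ n)"
    using s0 B by (intro frac_le) auto
  then have "(s / B) powr \<alpha> \<le> (s1 / (s0 * 2 ^ n)) powr \<alpha>"
    using s0 B_pos \<alpha> by (intro powr_mono2) auto
  also have "\<dots> = (s1 / s0) powr \<alpha> * (1 / 2 powr \<alpha>) ^ n"
    by (simp add: powr_divide powr_mult power_powr power_one_over)
  finally have second: "(s / B) powr \<alpha> \<le> (s1 / s0) powr \<alpha> * (1 / 2 powr \<alpha>) ^ n" .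
  show ?thesis
    using mult_mono[OF first second] by (simp add: mult.assoc)
qed

lemma mean_gap_le_song:
  assumes space: "sublinear_space M H E" and tspace: "sublinear_space Mt Ht Et"
    and U: "U \<in> H" and \<xi>: "\<xi> \<in> Ht"
    and f: "bLip1 f" "Et (\<lambda>\<omega>. f (\<xi> \<omega>)) = - Et (\<lambda>\<omega>. - f (\<xi> \<omega>))"
    and L: "L > 0" "\<And>x y. \<bar>f x - f y\<bar> \<le> L * \<bar>x - y\<bar>"
    and song: "\<And>g. bLip1_le1 g \<Longrightarrow> \<bar>E (\<lambda>\<omega>. g (U \<omega>)) - Et (\<lambda>\<omega>. g (\<xi> \<omega>))\<bar> \<le> \<delta>"
  shows "E (\<lambda>\<omega>. f (U \<omega>)) + E (\<lambda>\<omega>. - f (U \<omega>)) \<le> 2 * L * \<delta>"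
proof -
  interpret S: sublinear_expectation M H E by (rule sublinear_expectation.intro[OF space])
  interpret T: sublinear_expectation Mt Ht Et by (rule sublinear_expectation.intro[OF tspace])
  obtain B where B: "\<And>x. \<bar>f x\<bar> \<le> B" using f(1) unfolding bLip1_def by blast
  have normalized: "bLip1_le1 (\<lambda>x. h x / L)"
    if "\<And>x. \<bar>h x\<bar> \<le> B" "\<And>x y. \<bar>h x - h y\<bar> \<le> L * \<bar>x - y\<bar>" for h
    unfolding bLip1_le1_def
  proof (intro exI[of _ "B / L"] allI conjI)
    fix x y
    show "\<bar>h x / L\<bar> \<le> B / L" using that(1)[of x] L(1) by (simp add: abs_div divide_right_mono)
    show "\<bar>h x / L - h y / L\<bar> \<le> \<bar>x - y\<bar>"
      using that(2)[of x y] L(1) by (simp add: diff_divide_distrib[symmetric] abs_div field_simps)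
  qed
  have fU: "(\<lambda>\<omega>. f (U \<omega>)) \<in> H" and f\<xi>: "(\<lambda>\<omega>. f (\<xi> \<omega>)) \<in> Ht"
    by (rule S.closed_comp[OF f(1) U], rule T.closed_comp[OF f(1) \<xi>])
  have "E (\<lambda>\<omega>. f (U \<omega>)) / L - Et (\<lambda>\<omega>. f (\<xi> \<omega>)) / L \<le> \<delta>"
    using abs_le_D1[OF song[OF normalized[OF B L(2)]]] S.E_divide[OF fU L(1)] T.E_divide[OF f\<xi> L(1)]
    by simp
  moreover have "E (\<lambda>\<omega>. - f (U \<omega>)) / L - Et (\<lambda>\<omega>. - f (\<xi> \<omega>)) / L \<le> \<delta>"
    using abs_le_D1[OF song[OF normalized[of "\<lambda>x. - f x"]]] B L(2)
      S.E_divide[OF S.closed_uminus[OF fU] L(1)] T.E_divide[OF T.closed_uminus[OF f\<xi>] L(1)]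
    by (simp add: abs_minus_commute)
  moreover have "Et (\<lambda>\<omega>. f (\<xi> \<omega>)) / L = - (Et (\<lambda>\<omega>. - f (\<xi> \<omega>)) / L)" using f(2) by simp
  ultimately have "(E (\<lambda>\<omega>. f (U \<omega>)) + E (\<lambda>\<omega>. - f (U \<omega>))) / L \<le> 2 * \<delta>"
    by (simp add: add_divide_distrib)
  then show ?thesis using L(1) by (simp add: field_simps)
qed

lemma song_mean_gap_decay:
  assumes space: "sublinear_space M H E" and tspace: "sublinear_space Mt Ht Et"
    and seq: "standing_seq H E \<beta> \<alpha> X" and song: "song_bound H E Et \<xi> \<beta> \<alpha>"
    and moment: "\<exists>K. \<forall>i\<ge>1. E (\<lambda>\<omega>. \<bar>X i \<omega>\<bar> powr (2 + \<alpha>)) \<le> K" and \<alpha>: "0 < \<alpha>"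
    and f: "bLip1 f" "Et (\<lambda>\<omega>. f (\<xi> \<omega>)) = - Et (\<lambda>\<omega>. - f (\<xi> \<omega>))" and \<xi>: "\<xi> \<in> Ht"
    and c: "0 < c" "\<And>i. 1 \<le> i \<Longrightarrow> sqrt c \<le> sig E X i"
    and K: "\<And>i. 1 \<le> i \<Longrightarrow> sig E X i \<le> sqrt K"
    and L: "L > 0" "\<And>x y. \<bar>f x - f y\<bar> \<le> L * \<bar>x - y\<bar>"
  obtains Ce where "Ce \<ge> 0" "\<And>m i. 1 \<le> m \<Longrightarrow> i \<in> {4^(m-1)..<4^m} \<Longrightarrow>
    E (\<lambda>\<omega>. f (Wn E X i \<omega>)) + E (\<lambda>\<omega>. - f (Wn E X i \<omega>)) \<le> Ce * (1 / 2 powr \<alpha>) ^ (m - 1)"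
proof -
  interpret indep_sequence M H E X
    using space seq unfolding standing_seq_def by unfold_locales auto
  obtain Cs where Cs: "Cs > 0" "\<And>n g. 1 \<le> n \<Longrightarrow> bLip1_le1 g \<Longrightarrow>
      \<bar>E (\<lambda>\<omega>. g (Wn E X n \<omega>)) - Et (\<lambda>\<omega>. g (\<xi> \<omega>))\<bar> \<le>
      Cs * (MAX j\<in>{1..n}. E (\<lambda>\<omega>. \<bar>X j \<omega>\<bar> powr (2 + \<alpha>)) / (sig E X j) powr (2 + \<alpha>)
                           * (sig E X j / Bn E X n) powr \<alpha>)"
    using song seq unfolding song_bound_def by blast
  obtain Km where Km: "\<And>j. 1 \<le> j \<Longrightarrow> E (\<lambda>\<omega>. \<bar>X j \<omega>\<bar> powr (2 + \<alpha>)) \<le> Km"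
    using moment by blast
  define D where "D = max Km 0 / sqrt c powr (2 + \<alpha>) * (sqrt K / sqrt c) powr \<alpha>"
  have D: "D \<ge> 0" unfolding D_def by simp
  show ?thesis
  proof (rule that[of "2 * L * Cs * D"])
    show "0 \<le> 2 * L * Cs * D" using L(1) Cs(1) D by simp
    fix m i :: nat assume m: "1 \<le> m" and i: "i \<in> {4^(m-1)..<4^m}"
    have i1: "1 \<le> i" using i by (auto intro: order_trans[rotated])
    have Bn: "sqrt c * 2 ^ (m - 1) \<le> Bn E X i"
      using sqrt_mult_block_le[of c m i] Bn_ge_sqrt[of c E X i] c i by simp
    have "E (\<lambda>\<omega>. \<bar>X j \<omega>\<bar> powr (2 + \<alpha>)) / (sig E X j) powr (2 + \<alpha>) * (sig E X j / Bn E X i) powr \<alpha>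
        \<le> D * (1 / 2 powr \<alpha>) ^ (m - 1)" if j: "1 \<le> j" for j
      unfolding D_def using song_term_le[OF _ c(2)[OF j] K[OF j] Km[OF j] Bn \<alpha>] c(1) by simp
    then have song_rhs: "(MAX j\<in>{1..i}. E (\<lambda>\<omega>. \<bar>X j \<omega>\<bar> powr (2 + \<alpha>)) / (sig E X j) powr (2 + \<alpha>)
                         * (sig E X j / Bn E X i) powr \<alpha>) \<le> D * (1 / 2 powr \<alpha>) ^ (m - 1)"
      (is "?song_rhs \<le> _")
      using i1 by (intro Max.boundedI) auto
    have "E (\<lambda>\<omega>. f (Wn E X i \<omega>)) + E (\<lambda>\<omega>. - f (Wn E X i \<omega>)) \<le> 2 * L * (Cs * ?song_rhs)"
      by (rule mean_gap_le_song[OF space tspace Wn_in_H \<xi> f L Cs(2)[OF i1]])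
    also have "\<dots> \<le> 2 * L * (Cs * (D * (1 / 2 powr \<alpha>) ^ (m - 1)))"
      using song_rhs L(1) Cs(1) by (intro mult_left_mono) auto
    finally show "E (\<lambda>\<omega>. f (Wn E X i \<omega>)) + E (\<lambda>\<omega>. - f (Wn E X i \<omega>)) \<le>
        2 * L * Cs * D * (1 / 2 powr \<alpha>) ^ (m - 1)"
      by (simp add: mult.assoc)
  qed
qed

theorem lemma4p5:
  fixes M :: "'a measure" and H :: "('a \<Rightarrow> real) set" and E :: "('a \<Rightarrow> real) \<Rightarrow> real"
    and Mt :: "'b measure" and Ht :: "('b \<Rightarrow> real) set" and Et :: "('b \<Rightarrow> real) \<Rightarrow> real"
    and X :: "nat \<Rightarrow> 'a \<Rightarrow> real" and \<xi> :: "'b \<Rightarrow> real"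
    and \<beta> \<alpha> :: real and f :: "real \<Rightarrow> real"
  assumes space: "sublinear_space M H E" and condA: "condA H E"
    and tspace: "sublinear_space Mt Ht Et" and tcondA: "condA Ht Et"
    and beta: "\<beta> \<ge> 1"
    and alpha: "0 < \<alpha>" "\<alpha> < 1"
    and seq: "standing_seq H E \<beta> \<alpha> X"
    and xi: "\<xi> \<in> Ht" "(\<lambda>\<omega>. (\<xi> \<omega>)\<^sup>2) \<in> Ht" "G_normal Et \<xi>"
    and xi_up: "sqrt (Et (\<lambda>\<omega>. (\<xi> \<omega>)\<^sup>2)) = 2 * \<beta> / (1 + \<beta>)"
    and xi_lo: "sqrt (- Et (\<lambda>\<omega>. - (\<xi> \<omega>)\<^sup>2)) = 2 / (1 + \<beta>)"
    and song: "song_bound H E Et \<xi> \<beta> \<alpha>"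
    and moment: "\<exists>K. \<forall>i\<ge>1. E (\<lambda>\<omega>. \<bar>X i \<omega>\<bar> powr (2 + \<alpha>)) \<le> K"
    and fH: "bLip1 f" "Et (\<lambda>\<omega>. f (\<xi> \<omega>)) = - Et (\<lambda>\<omega>. - f (\<xi> \<omega>))"
  shows "\<exists>M6>0. \<forall>n\<ge>1.
     E (\<lambda>\<omega>. (\<Sum>l=1..n. \<Sum>i\<in>{4^(l-1)..<4^l}.
            (f (Wn E X i \<omega>) - E (\<lambda>\<omega>'. f (Wn E X i \<omega>'))) / real i)\<^sup>2) \<le> M6 * real n"
proof -
  have X: "indep_seq E X" "\<And>i. 1 \<le> i \<Longrightarrow> X i \<in> H" "\<And>i. 1 \<le> i \<Longrightarrow> (\<lambda>\<omega>. (X i \<omega>)\<^sup>2) \<in> H"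
    "\<And>i. 1 \<le> i \<Longrightarrow> E (X i) = 0" "\<And>i. 1 \<le> i \<Longrightarrow> E (\<lambda>\<omega>. - X i \<omega>) = 0"
    using seq unfolding standing_seq_def by blast+
  obtain c K where c: "c > 0" "\<And>i. 1 \<le> i \<Longrightarrow> sqrt c \<le> sig E X i"
    and K: "K > 0" "\<And>i. 1 \<le> i \<Longrightarrow> E (\<lambda>\<omega>. (X i \<omega>)\<^sup>2) \<le> K" "\<And>i. 1 \<le> i \<Longrightarrow> sig E X i \<le> sqrt K"
    using standing_seq_sig_bounds[OF space seq beta] by metis
  obtain B L where f: "B \<ge> 0" "\<And>x. \<bar>f x\<bar> \<le> B" "L > 0" "\<And>x y. \<bar>f x - f y\<bar> \<le> L * \<bar>x - y\<bar>"
    using bLip1E[OF fH(1)] by metis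
  obtain Ce where Ce: "Ce \<ge> 0" and decay: "\<And>m i. 1 \<le> m \<Longrightarrow> i \<in> {4^(m-1)..<4^m} \<Longrightarrow>
      E (\<lambda>\<omega>. f (Wn E X i \<omega>)) + E (\<lambda>\<omega>. - f (Wn E X i \<omega>)) \<le> Ce * (1 / 2 powr \<alpha>) ^ (m - 1)"
    using song_mean_gap_decay[OF space tspace seq song moment alpha(1) fH xi(1) c K(3) f(3,4)] by metis
  have q: "2 powr \<alpha> > 1" using alpha(1) by simp
  interpret block_sums M H E X f B L K c Ce "2 powr \<alpha>"
  proof
    show "sublinear_space M H E" by (rule space)
  qed (use X K c Bn_ge_sqrt[of c E X] f Ce q decay in auto)
  show ?thesis using E_T_sq_le_linear unfolding T_def Z_def block_def mu_def by simp
qed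

end
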